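(* Let $0<\delta<1/4$, $K_3>K_2>K_1>1$, $p\in(0,1/2]$, and let $\epsilon\in(0,c(p)]$ for a suitable function $c(p)>0$. There exist $\lambda=\lambda(p,\epsilon)\in(0,1/3)$, $\gamma=\gamma(p,\epsilon)\in(0,1)$ and $n_0=n_0(p,\epsilon)$ such that the following holds. Let $n\ge n_0$, $1\le N\le\binom{n}{\lfloor pn\rfloor}\exp(-\epsilon n)$, let $\mathcal{A}$ be $(N,n,K_1,K_2,K_3,\delta)$-admissible, let $f\in\ell_1(\mathbb{Z})$ be nonnegative with $\|f\|_1=1$, let $L\ge1$ and $R=\gamma L$, and let integers $\ell\in[(1-\gamma)n,n]$ and $s\in[p\ell-\gamma\ell,p\ell+\gamma\ell]$. Then for every fixed $(X_1,\dots,X_n)\in\mathcal{A}$, if $\|f_{\mathcal{A},s,\ell}\|_\infty\ge L(N\sqrt{n})^{-1}$, there exists $t\in\mathbb{Z}$ with $f_{\mathcal{A},s,\ell}(t)\ge L(N\sqrt{n})^{-1}$ whose averaging sequence $(t_i)_{i=0}^\ell$ and step record $(w_i)_{i=1}^\ell$ satisfy \[\#\{i\in[\ell] : \text{step } i \text{ is } \lambda\text{-robust and step } i \text{ is not an } R\text{-drop}\}\ge\gamma n.\]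
   Context: Admissible sets: for integers $N,n\ge1$ and reals $0<\delta<1/4$, $K_3>K_2>K_1>1$, a set $\mathcal{A}\subseteq\mathbb{Z}^n$ is $(N,n,K_1,K_2,K_3,\delta)$-admissible if: $\mathcal{A}=A_1\times\cdots\times A_n$ with each $A_i\subseteq\mathbb{Z}$; $|A_1|\cdots|A_n|\le(K_3N)^n$; $\max_i\max\{|a|:a\in A_i\}\le nN$; $A_i$ is an integer interval of size at least $2N+1$ for $i>2\delta n$; and either (P1),(P2) or (Q1),(Q2) hold, where (P1): for $i\le\delta n$, $A_{2i}$ is an integer interval of size at least $2N+1$ contained in $[-K_1N,K_1N]$; (P2): for $i\le\delta n$, $A_{2i-1}$ is symmetric about $0$, is a union of two integer intervals of total size at least $2N$, and $A_{2i-1}\cap[-K_2N,K_2N]=\emptyset$; (Q1): for $i\le\delta n$, $A_{2i}$ is an integer interval of size at least $2N+1$ contained in $[K_1N,K_2N]$; (Q2): for $i\le\delta n$, $A_{2i-1}$ is an integer interval of size at least $2N+1$ contained in $[-K_2N,-K_1N]$. Averages: for fixed $(X_1,\dots,X_n)$, $f:\mathbb{Z}\to\mathbb{R}$ and integers $0\le s\le\ell\le n$, $f_{\mathcal{A},s,\ell}(t)=\binom{\ell}{s}^{-1}\sum_{v\in\{0,1\}^\ell_s}f(t+v_1X_1+\cdots+v_\ell X_\ell)$, where $\{0,1\}^\ell_s$ is the set of $0/1$ vectors of length $\ell$ with sum $s$; by convention $f_{\mathcal{A},s,\ell}\equiv 0$ if $s<0$ or $s>\ell$. One has $f_{\mathcal{A},s,\ell}(t)=(1-s/\ell)f_{\mathcal{A},s,\ell-1}(t)+(s/\ell)f_{\mathcal{A},s-1,\ell-1}(t+X_\ell)$.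 Step record and averaging sequence of $t$ (given $f,\mathcal{A},s,\ell$ and $X$): set $t_\ell=t$, $s_\ell = s$. Recursively for $i=\ell,\ell-1,\dots,1$, with $h_i=f_{\mathcal{A},s_i,i}(t_i)$: set $w_i=0$ if $1-s_i/i>0$ and $f_{\mathcal{A},s_i,i-1}(t_i)\ge h_i$, and otherwise $w_i=1$ (then $s_i/i>0$ and $f_{\mathcal{A},s_i-1,i-1}(t_i+X_i)\ge h_i$); set $t_{i-1}=t_i+w_iX_i$ and $s_{i-1}=s_i-w_i$. Let $W_i=\sum_{j=1}^i w_j$ (so $W_i = s_i$) and $\overline{W}_i=W_i/i$. Step $i$ is $\lambda$-robust if $\overline{W}_i\in(\lambda,1-\lambda)$. There is an $R$-drop at step $i$ if $f_{\mathcal{A},W_i-y,i-1}(t_{i-1}+zX_i)\le R/(N\sqrt{n})$ for all $y\in\{0,1\}$ and $z\in\{-1,1\}$. *)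

theory Defs
  imports "HOL-Analysis.Analysis"
begin

definition int_interval_size_ge :: "int set \<Rightarrow> int \<Rightarrow> bool" where
  "int_interval_size_ge B m \<longleftrightarrow> (\<exists>a b. B = {a..b} \<and> b - a + 1 \<ge> m)"

(* A = A_1 x ... x A_n represented by the factor family A i, i \<in> {1..n} *)
definition admissible ::
  "nat \<Rightarrow> nat \<Rightarrow> real \<Rightarrow> real \<Rightarrow> real \<Rightarrow> real \<Rightarrow> (nat \<Rightarrow> int set) \<Rightarrow> bool" where
  "admissible N n K1 K2 K3 \<delta> A \<longleftrightarrow>
     (\<Prod>i\<in>{1..n}. real (card (A i))) \<le> (K3 * real N) ^ n
   \<and> (\<forall>i\<in>{1..n}. \<forall>a\<in>A i. \<bar>a\<bar> \<le> int n * int N)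
   \<and> (\<forall>i\<in>{1..n}. real i > 2 * \<delta> * real n \<longrightarrow> int_interval_size_ge (A i) (2 * int N + 1))
   \<and> ( ( (\<forall>i. 1 \<le> i \<and> real i \<le> \<delta> * real n \<longrightarrow>
              int_interval_size_ge (A (2*i)) (2 * int N + 1) \<and>
              (\<forall>a\<in>A (2*i). - K1 * real N \<le> real_of_int a \<and> real_of_int a \<le> K1 * real N))
         \<and> (\<forall>i. 1 \<le> i \<and> real i \<le> \<delta> * real n \<longrightarrow>
              (\<forall>a. a \<in> A (2*i-1) \<longleftrightarrow> - a \<in> A (2*i-1)) \<and>
              (\<exists>a b c d. A (2*i-1) = {a..b} \<union> {c..d} \<and> card (A (2*i-1)) \<ge> 2 * N) \<and>
              (\<forall>a\<in>A (2*i-1). \<not> (- K2 * real N \<le> real_of_int a \<and> real_of_int a \<le> K2 * real N))))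
       \<or> ( (\<forall>i. 1 \<le> i \<and> real i \<le> \<delta> * real n \<longrightarrow>
              int_interval_size_ge (A (2*i)) (2 * int N + 1) \<and>
              (\<forall>a\<in>A (2*i). K1 * real N \<le> real_of_int a \<and> real_of_int a \<le> K2 * real N))
         \<and> (\<forall>i. 1 \<le> i \<and> real i \<le> \<delta> * real n \<longrightarrow>
              int_interval_size_ge (A (2*i-1)) (2 * int N + 1) \<and>
              (\<forall>a\<in>A (2*i-1). - K2 * real N \<le> real_of_int a \<and> real_of_int a \<le> - K1 * real N))))"

(* f_{A,s,l}(t): average over 0/1 vectors of length l with sum s, encoded as
   subsets S of {1..l} with card S = s; zero if s < 0 or s > l *)
definition avg :: "(int \<Rightarrow> real) \<Rightarrow> (nat \<Rightarrow> int) \<Rightarrow> int \<Rightarrow> nat \<Rightarrow> int \<Rightarrow> real" where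
  "avg f X s l t =
     (if s < 0 \<or> s > int l then 0
      else (\<Sum>S\<in>{S. S \<subseteq> {1..l} \<and> card S = nat s}. f (t + (\<Sum>j\<in>S. X j)))
           / real (l choose nat s))"

definition wbit :: "(int \<Rightarrow> real) \<Rightarrow> (nat \<Rightarrow> int) \<Rightarrow> int \<Rightarrow> int \<Rightarrow> nat \<Rightarrow> int" where
  "wbit f X ti si i =
     (if 1 - real_of_int si / real i > 0 \<and> avg f X si (i - 1) ti \<ge> avg f X si i ti then 0 else 1)"

(* avstate f X l t s k = (t_{l-k}, s_{l-k}) *)
fun avstate :: "(int \<Rightarrow> real) \<Rightarrow> (nat \<Rightarrow> int) \<Rightarrow> nat \<Rightarrow> int \<Rightarrow> int \<Rightarrow> nat \<Rightarrow> int \<times> int" where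
  "avstate f X l t s 0 = (t, s)"
| "avstate f X l t s (Suc k) =
     (let i = l - k; (ti, si) = avstate f X l t s k; w = wbit f X ti si i
      in (ti + w * X i, si - w))"

definition tseq :: "(int \<Rightarrow> real) \<Rightarrow> (nat \<Rightarrow> int) \<Rightarrow> int \<Rightarrow> nat \<Rightarrow> int \<Rightarrow> nat \<Rightarrow> int" where
  "tseq f X s l t i = fst (avstate f X l t s (l - i))"

definition wseq :: "(int \<Rightarrow> real) \<Rightarrow> (nat \<Rightarrow> int) \<Rightarrow> int \<Rightarrow> nat \<Rightarrow> int \<Rightarrow> nat \<Rightarrow> int" where
  "wseq f X s l t i =
     (let (ti, si) = avstate f X l t s (l - i) in wbit f X ti si i)"

definition Wsum :: "(int \<Rightarrow> real) \<Rightarrow> (nat \<Rightarrow> int) \<Rightarrow> int \<Rightarrow> nat \<Rightarrow> int \<Rightarrow> nat \<Rightarrow> int" where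
  "Wsum f X s l t i = (\<Sum>j\<in>{1..i}. wseq f X s l t j)"

definition robust_step :: "real \<Rightarrow> (int \<Rightarrow> real) \<Rightarrow> (nat \<Rightarrow> int) \<Rightarrow> int \<Rightarrow> nat \<Rightarrow> int \<Rightarrow> nat \<Rightarrow> bool" where
  "robust_step lam f X s l t i \<longleftrightarrow>
     (let Wb = real_of_int (Wsum f X s l t i) / real i in lam < Wb \<and> Wb < 1 - lam)"

definition drop_step :: "real \<Rightarrow> nat \<Rightarrow> nat \<Rightarrow> (int \<Rightarrow> real) \<Rightarrow> (nat \<Rightarrow> int) \<Rightarrow> int \<Rightarrow> nat \<Rightarrow> int \<Rightarrow> nat \<Rightarrow> bool" where
  "drop_step R N n f X s l t i \<longleftrightarrow>
     (\<forall>y\<in>{0,1::int}. \<forall>z\<in>{-1,1::int}.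
        avg f X (Wsum f X s l t i - y) (i - 1) (tseq f X s l t (i - 1) + z * X i)
          \<le> R / (real N * sqrt (real n)))"

end

theory Submission
  imports Defs
begin

(*
  Fix t at which the average reaches the threshold; it exists because f is summable, so only
  finitely many t have a large average. Along the averaging walk the heights
  h_i = f_{A,s_i,i}(t_i) never decrease as i goes down, and h_i = q_i h_{i-1} + (1 - q_i) o_i,
  where q_i is the weight (1 - s_i/i or s_i/i) of the branch taken and o_i the average along the
  other branch. The q_i multiply to exactly 1 / binom(l, s). At an R-drop o_i <= gamma h_i, so
  q_i h_{i-1} >= (1 - gamma) h_i; at every other step q_i h_{i-1} >= q_i h_i. Telescoping,
    1 >= f(t_0) >= (1 - gamma)^l binom(l, s) f_{A,s,l}(t) prod_{non-drop i} q_i.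
  At a robust step q_i > lambda. At a non-robust step q_i >= 1 - lambda unless the walk moves
  towards the boundary of the density range; there s_i (or i - s_i) increases and stays below
  lambda i, so these q_i are ratios k / i with distinct k <= lambda l, whose product is at least
  exp(-2 sqrt(lambda) l). If fewer than gamma n steps were robust and non-drop, then, using
  N <= binom(n, pn) exp(-epsilon n) and binom(n, pn) <= exp(O(gamma n log(1/p))) binom(l, s),
  the right-hand side would be at least exp(epsilon n / 4) / sqrt n, which exceeds 1 for large n.
*)

lemma prod_superset_le:
  fixes g :: "'a \<Rightarrow> real"
  assumes "finite C" "B \<subseteq> C" "\<And>x. x \<in> C \<Longrightarrow> 0 \<le> g x \<and> g x \<le> 1"
  shows "prod g C \<le> prod g B"
proof -
  have "prod g C = prod g B * prod g (C - B)"
    using assms by (metis prod.subset_diff mult.commute)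
  moreover have "prod g (C - B) \<le> 1" by (rule prod_le_1) (use assms in auto)
  moreover have "prod g B \<ge> 0" by (rule prod_nonneg) (use assms in auto)
  ultimately show ?thesis by (simp add: mult_left_le)
qed

lemma prod_union_ge:
  fixes g :: "'a \<Rightarrow> real"
  assumes "finite A" "finite B" "\<And>x. x \<in> A \<union> B \<Longrightarrow> 0 \<le> g x \<and> g x \<le> 1"
  shows "prod g A * prod g B \<le> prod g (A \<union> B)"
proof -
  have "prod g (A \<union> B) = prod g A * prod g (B - A)"
    using assms by (metis Un_Diff_cancel prod.union_disjoint Diff_disjoint finite_Diff)
  moreover have "prod g B \<le> prod g (B - A)"
    by (rule prod_superset_le) (use assms in auto)
  moreover have "prod g A \<ge> 0" by (rule prod_nonneg) (use assms in auto)
  ultimately show ?thesis by (simp add: mult_left_mono)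
qed

lemma power_div_fact_le_exp:
  fixes x :: real assumes "0 \<le> x" shows "x ^ n / fact n \<le> exp x"
proof -
  have s: "(\<lambda>k. x ^ k /\<^sub>R fact k) sums exp x" by (rule exp_converges)
  have "sum (\<lambda>k. x ^ k /\<^sub>R fact k) {n} \<le> suminf (\<lambda>k. x ^ k /\<^sub>R fact k)"
    by (rule sum_le_suminf) (use s assms in \<open>auto simp: sums_iff\<close>)
  then show ?thesis using s by (simp add: sums_iff divide_inverse mult.commute)
qed

lemma exp_neg_le_power:
  fixes \<beta> :: real and K L :: nat
  assumes \<beta>: "0 < \<beta>" "\<beta> < 1" and K: "real K \<le> \<beta>\<^sup>2 * real L"
  shows "exp (- \<beta> * real L) \<le> \<beta> ^ K"
proof -
  have "- ln \<beta> < 1 / \<beta>"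
    using ln_less_self[of "1/\<beta>"] \<beta> by (simp add: ln_div)
  then have "- 1 \<le> \<beta> * ln \<beta>"
    using \<beta> by (simp add: field_simps)
  then have "\<beta> * (- 1) \<le> \<beta> * (\<beta> * ln \<beta>)"
    using \<beta> by (intro mult_left_mono) auto
  then have "- \<beta> \<le> \<beta>\<^sup>2 * ln \<beta>"
    by (simp add: power2_eq_square mult.assoc)
  then have "real L * (- \<beta>) \<le> real L * (\<beta>\<^sup>2 * ln \<beta>)"
    by (rule mult_left_mono) simp
  also have "\<dots> \<le> real K * ln \<beta>"
    using K \<beta> by (simp add: mult.assoc mult.left_commute[of "real L"] mult_right_mono_neg)
  finally have "exp (- \<beta> * real L) \<le> exp (real K * ln \<beta>)"
    by (simp add: mult.commute)
  also have "\<dots> = \<beta> ^ K"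
    using \<beta> by (simp add: exp_of_nat_mult)
  finally show ?thesis .
qed

lemma fact_div_power_ge_exp:
  fixes \<beta> :: real and K L :: nat
  assumes \<beta>: "0 < \<beta>" "\<beta> < 1" and K: "real K \<le> \<beta>\<^sup>2 * real L"
  shows "exp (- 2 * \<beta> * real L) \<le> fact K / real L ^ K"
proof (cases "K = 0")
  case True
  then show ?thesis using \<beta> by simp
next
  case False
  then have L: "real L > 0" using K by (cases "L = 0") auto
  have "(\<beta> * real L) ^ K / fact K \<le> exp (\<beta> * real L)"
    by (rule power_div_fact_le_exp) (use \<beta> in simp)
  then have fact_ge: "\<beta> ^ K * real L ^ K * exp (- \<beta> * real L) \<le> fact K"
    by (simp add: field_simps power_mult_distrib exp_minus)
  have "exp (- \<beta> * real L) * exp (- \<beta> * real L) \<le> \<beta> ^ K * exp (- \<beta> * real L)"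
    using exp_neg_le_power[OF \<beta> K] by (simp add: mult_right_mono)
  moreover have "exp (- \<beta> * real L) * exp (- \<beta> * real L) = exp (- 2 * \<beta> * real L)"
    by (simp flip: exp_add)
  moreover have "\<beta> ^ K * exp (- \<beta> * real L) \<le> fact K / real L ^ K"
    using fact_ge L by (simp add: field_simps)
  ultimately show ?thesis by linarith
qed

lemma fact_div_power_le_prod:
  fixes B :: "int set" and K L :: nat
  assumes B: "B \<subseteq> {1..int K}" and "K \<le> L"
  shows "fact K / real L ^ K \<le> (\<Prod>k\<in>B. real_of_int k / real L)"
proof -
  have "{1..int K} = int ` {1..K}" by (simp add: image_int_atLeastAtMost)
  moreover have "(\<Prod>k\<in>{1..K}. real k / real L) = fact K / real L ^ K"
    by (simp add: prod_dividef fact_prod)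
  ultimately have "fact K / real L ^ K = (\<Prod>k\<in>{1..int K}. real_of_int k / real L)"
    by (simp add: prod.reindex)
  also have "\<dots> \<le> (\<Prod>k\<in>B. real_of_int k / real L)"
    by (rule prod_superset_le[OF _ B]) (use \<open>K \<le> L\<close> in \<open>auto simp: divide_le_eq_1\<close>)
  finally show ?thesis .
qed

lemma prod_increments_ge_exp:
  fixes V :: "nat \<Rightarrow> int" and \<beta> :: real
  assumes "mono V" and A: "A \<subseteq> {1..L}"
    and jump: "\<And>i. i \<in> A \<Longrightarrow> V (i - 1) < V i"
    and range: "\<And>i. i \<in> A \<Longrightarrow> 1 \<le> V i \<and> real_of_int (V i) \<le> \<beta>\<^sup>2 * real i"
    and \<beta>: "0 < \<beta>" "\<beta> < 1"
  shows "exp (- 2 * \<beta> * real L) \<le> (\<Prod>i\<in>A. real_of_int (V i) / real i)"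
proof -
  define K where "K = nat \<lfloor>\<beta>\<^sup>2 * real L\<rfloor>"
  have K: "real K \<le> \<beta>\<^sup>2 * real L" unfolding K_def using \<beta> by simp
  also have "\<dots> \<le> real L" using \<beta> by (simp add: mult_left_le_one_le power_le_one)
  finally have "K \<le> L" by simp
  have inj: "inj_on V A"
  proof (rule linorder_inj_onI)
    fix i j assume "i \<in> A" "j \<in> A" "i < j"
    then have "V i \<le> V (j - 1)" using \<open>mono V\<close> by (simp add: monoD)
    then show "V i \<noteq> V j" using jump[OF \<open>j \<in> A\<close>] by simp
  qed auto
  have image: "V ` A \<subseteq> {1..int K}"
  proof
    fix k assume "k \<in> V ` A"
    then obtain i where i: "i \<in> A" "k = V i" by auto
    have "real i \<le> real L" using A i by auto
    then have "real_of_int k \<le> \<beta>\<^sup>2 * real L"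
      using range[OF i(1)] i by (smt (verit) mult_left_mono zero_le_power2)
    then have "k \<le> \<lfloor>\<beta>\<^sup>2 * real L\<rfloor>" by linarith
    then show "k \<in> {1..int K}" using range[OF i(1)] i unfolding K_def by auto
  qed
  have "exp (- 2 * \<beta> * real L) \<le> fact K / real L ^ K"
    by (rule fact_div_power_ge_exp[OF \<beta> K])
  also have "\<dots> \<le> (\<Prod>i\<in>A. real_of_int (V i) / real L)"
    using fact_div_power_le_prod[OF image \<open>K \<le> L\<close>] by (simp add: prod.reindex[OF inj])
  also have "\<dots> \<le> (\<Prod>i\<in>A. real_of_int (V i) / real i)"
  proof (rule prod_mono)
    fix i assume i: "i \<in> A"
    then have "1 \<le> V i" "1 \<le> i" "i \<le> L" using range A by auto
    then show "0 \<le> real_of_int (V i) / real L \<and> real_of_int (V i) / real L \<le> real_of_int (V i) / real i"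
      by (auto intro!: divide_left_mono)
  qed
  finally show ?thesis .
qed

lemma prod_ge_of_few_increments:
  fixes q :: "nat \<Rightarrow> real" and V :: "nat \<Rightarrow> int" and \<beta> :: real
  assumes S: "S \<subseteq> {1..L}" and "mono V" and \<beta>: "0 < \<beta>" "\<beta> < 1"
    and other: "\<And>i. i \<in> S \<Longrightarrow> \<not> P i \<Longrightarrow> 1 - \<beta>\<^sup>2 \<le> q i"
    and special: "\<And>i. i \<in> S \<Longrightarrow> P i \<Longrightarrow> q i = real_of_int (V i) / real i \<and> V (i - 1) < V i \<and>
                                            1 \<le> V i \<and> real_of_int (V i) \<le> \<beta>\<^sup>2 * real i"
  shows "(1 - \<beta>\<^sup>2) ^ L * exp (- 2 * \<beta> * real L) \<le> (\<Prod>i\<in>S. q i)"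
proof -
  let ?r = "\<lambda>i. if P i then q i else 1"
  have lam: "0 \<le> 1 - \<beta>\<^sup>2" "1 - \<beta>\<^sup>2 \<le> 1" using \<beta> by (simp_all add: power_le_one)
  have fin: "finite S" using S finite_subset by blast
  have r: "0 \<le> ?r i" if "i \<in> S" for i
    using special[OF that] by auto
  have "exp (- 2 * \<beta> * real L) \<le> (\<Prod>i\<in>{i \<in> S. P i}. real_of_int (V i) / real i)"
    by (rule prod_increments_ge_exp[OF \<open>mono V\<close> _ _ _ \<beta>]) (use S special in auto)
  also have "\<dots> = (\<Prod>i\<in>{i \<in> S. P i}. q i)"
    by (rule prod.cong) (use special in auto)
  also have "\<dots> = (\<Prod>i\<in>S. ?r i)"
    using prod.inter_filter[OF fin, of q P] by simp
  finally have increments: "exp (- 2 * \<beta> * real L) \<le> (\<Prod>i\<in>S. ?r i)" .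
  have "card S \<le> card {1..L}" by (rule card_mono[OF _ S]) simp
  then have "(1 - \<beta>\<^sup>2) ^ L \<le> (1 - \<beta>\<^sup>2) ^ card S" using lam by (intro power_decreasing) auto
  then have "(1 - \<beta>\<^sup>2) ^ L * exp (- 2 * \<beta> * real L) \<le> (1 - \<beta>\<^sup>2) ^ card S * (\<Prod>i\<in>S. ?r i)"
    using increments lam by (intro mult_mono) auto
  also have "\<dots> = (\<Prod>i\<in>S. (1 - \<beta>\<^sup>2) * ?r i)"
    by (simp add: prod.distrib)
  also have "\<dots> \<le> (\<Prod>i\<in>S. q i)"
  proof (rule prod_mono)
    fix i assume "i \<in> S"
    then show "0 \<le> (1 - \<beta>\<^sup>2) * ?r i \<and> (1 - \<beta>\<^sup>2) * ?r i \<le> q i"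
      using lam r[of i] other[of i] mult_left_le_one_le[OF r[of i] lam] by auto
  qed
  finally show ?thesis .
qed

lemma Suc_times_binomial_eq_diff: "real (Suc k) * real (n choose Suc k) = real (n - k) * real (n choose k)"
proof -
  have "Suc k * (n choose Suc k) = (n - k) * (n choose k)"
    using binomial_absorption[of k n] binomial_absorb_comp[of n k] by simp
  then show ?thesis by (metis of_nat_mult)
qed

lemma binomial_le_extend:
  assumes "4 * m \<le> 3 * (a + 1)"
  shows "real ((a + d) choose m) \<le> 4 ^ d * real (a choose m)"
proof (induction d)
  case (Suc d)
  let ?n = "Suc (a + d)"
  have "m < ?n" "real ?n \<le> 4 * real (?n - m)" using assms by (simp_all add: of_nat_diff)
  have "(?n - m) * (?n choose m) = ?n * ((a + d) choose m)"
    using binomial_absorb_comp[of ?n m] by simp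
  then have "real (?n - m) * real (?n choose m) = real ?n * real ((a + d) choose m)"
    by (metis of_nat_mult)
  also have "\<dots> \<le> real (?n - m) * (4 * real ((a + d) choose m))"
    using mult_right_mono[OF \<open>real ?n \<le> 4 * real (?n - m)\<close>, of "real ((a + d) choose m)"]
    by (simp only: ac_simps of_nat_0_le_iff simp_thms)
  finally have "real (?n choose m) \<le> 4 * real ((a + d) choose m)"
    using \<open>m < ?n\<close> by (simp add: mult_le_cancel_left_pos)
  then show ?case using Suc.IH by simp
qed simp

lemma binomial_le_shift_up:
  assumes C: "0 \<le> C" "real l \<le> C * real (k + 1)"
  shows "real (l choose (k + d)) \<le> C ^ d * real (l choose k)"
proof (induction d)
  case 0 then show ?case by simp
next
  case (Suc d)
  have e: "real (Suc (k + d)) * real (l choose Suc (k + d)) = real (l - (k + d)) * real (l choose (k + d))"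
    by (rule Suc_times_binomial_eq_diff)
  have "real (l - (k + d)) \<le> C * real (Suc (k + d))"
    using C by (smt (verit) le_add1 mult_left_mono of_nat_add of_nat_le_iff diff_le_self Suc_eq_plus1 add.commute add_Suc)
  then have "real (Suc (k + d)) * real (l choose Suc (k + d)) \<le> C * real (Suc (k + d)) * real (l choose (k + d))"
    using e by (simp add: mult_right_mono)
  then have "real (l choose Suc (k + d)) \<le> C * real (l choose (k + d))"
    by (simp add: mult.assoc mult.left_commute[of C])
  also have "\<dots> \<le> C * (C ^ d * real (l choose k))" using Suc.IH C by (simp add: mult_left_mono)
  finally show ?case by (simp add: mult.assoc)
qed

lemma binomial_le_shift_down:
  assumes C: "0 \<le> C" "k + d \<le> l" "real (k + d) \<le> C * real (l - (k + d) + 1)"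
  shows "real (l choose k) \<le> C ^ d * real (l choose (k + d))"
  using C
proof (induction d arbitrary: k)
  case 0 then show ?case by simp
next
  case (Suc d)
  have e: "real (Suc k) * real (l choose Suc k) = real (l - k) * real (l choose k)"
    by (rule Suc_times_binomial_eq_diff)
  have lk: "real (l - k) > 0" using Suc.prems by simp
  have "real (Suc k) \<le> real (k + Suc d)" by simp
  also have "\<dots> \<le> C * real (l - (k + Suc d) + 1)" using Suc.prems by simp
  also have "\<dots> \<le> C * real (l - k)" using Suc.prems by (intro mult_left_mono) auto
  finally have "real (l - k) * real (l choose k) \<le> C * real (l - k) * real (l choose Suc k)"
    using e by (smt (verit) mult_right_mono of_nat_0_le_iff mult.commute)
  then have a: "real (l choose k) \<le> C * real (l choose Suc k)"
    using lk by (simp add: mult.assoc mult.left_commute[of C])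
  have "real (l choose Suc k) \<le> C ^ d * real (l choose (Suc k + d))"
    by (rule Suc.IH) (use Suc.prems in auto)
  then have "real (l choose k) \<le> C * (C ^ d * real (l choose (Suc k + d)))"
    using a Suc.prems(1) by (smt (verit) mult_left_mono)
  then show ?case by (simp add: mult.assoc)
qed

lemma binomial_le_shift:
  fixes C :: real and l m k :: nat
  assumes C: "0 \<le> C" and k: "k \<le> l" "real l \<le> C * real (k + 1)" "real k \<le> C * real (l - k + 1)"
  shows "real (l choose m) \<le> C ^ nat \<bar>int m - int k\<bar> * real (l choose k)"
proof (cases "k \<le> m")
  case True
  then have "nat \<bar>int m - int k\<bar> = m - k" "k + (m - k) = m" by auto
  then show ?thesis using binomial_le_shift_up[OF C k(2), of "m - k"] by simp
next
  case False
  then have "nat \<bar>int m - int k\<bar> = k - m" "m + (k - m) = k" by auto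
  then show ?thesis using binomial_le_shift_down[of C m "k - m" l] C k by simp
qed

lemma bounded_deviation_range:
  fixes p \<gamma> :: real and l :: nat and s :: int
  assumes "0 < p" "p \<le> 1/2" "0 < \<gamma>" "\<gamma> \<le> p/2" "\<gamma> \<le> 1/4"
    and "p * real l - \<gamma> * real l \<le> real_of_int s" "real_of_int s \<le> p * real l + \<gamma> * real l"
  shows "p * real l / 2 \<le> real_of_int s" "real_of_int s \<le> 3/4 * real l"
proof -
  have "\<gamma> * real l \<le> p / 2 * real l" "(p + \<gamma>) * real l \<le> 3/4 * real l"
    using assms by (intro mult_right_mono; simp)+
  then show "p * real l / 2 \<le> real_of_int s" "real_of_int s \<le> 3/4 * real l"
    using assms(6,7) by (simp_all add: algebra_simps)
qed

lemma binomial_floor_le_nearby: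
  fixes p \<gamma> :: real and n l :: nat and s :: int
  assumes p: "0 < p" "p \<le> 1/2" and \<gamma>: "0 < \<gamma>" "\<gamma> \<le> p/2" "\<gamma> \<le> 1/4"
    and l: "(1 - \<gamma>) * real n \<le> real l" "l \<le> n"
    and s: "p * real l - \<gamma> * real l \<le> real_of_int s" "real_of_int s \<le> p * real l + \<gamma> * real l"
  shows "real (n choose nat \<lfloor>p * real n\<rfloor>) \<le>
           4 ^ (n - l) * (4 / p) ^ (nat \<bar>\<lfloor>p * real n\<rfloor> - s\<bar>) * real (l choose nat s)"
proof -
  define m where "m = nat \<lfloor>p * real n\<rfloor>"
  define k where "k = nat s"
  have "p * real l / 2 \<le> real_of_int s" "real_of_int s \<le> 3/4 * real l"
    by (rule bounded_deviation_range[OF p \<gamma> s])+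
  moreover have "0 \<le> p * real l / 2" using p by simp
  ultimately have k: "p * real l / 2 \<le> real k" "real k \<le> 3/4 * real l" "int k = s"
    unfolding k_def by auto
  have "0 \<le> \<lfloor>p * real n\<rfloor>" using p by simp
  then have m: "int m = \<lfloor>p * real n\<rfloor>" "real m \<le> p * real n" unfolding m_def by linarith+
  have "p * real n \<le> 1/2 * real n" "(1 - \<gamma>) * real n \<ge> 3/4 * real n"
    using p \<gamma> by (intro mult_right_mono; simp)+
  then have "real m \<le> real n / 2" "3/4 * real n \<le> real l" using m l by linarith+
  then have "real (4 * m) \<le> real (3 * (l + 1))" by simp
  then have "4 * m \<le> 3 * (l + 1)" by (simp only: of_nat_le_iff)
  then have "real (n choose m) \<le> 4 ^ (n - l) * real (l choose m)"
    using binomial_le_extend[of m l "n - l"] l by simp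
  also have "real (l choose m) \<le> (4 / p) ^ nat \<bar>int m - int k\<bar> * real (l choose k)"
  proof (rule binomial_le_shift)
    have "4 / p * (p * real l / 2) \<le> 4 / p * real (k + 1)" using k p by (intro mult_left_mono) auto
    then show "real l \<le> 4 / p * real (k + 1)" using p by simp
    show "k \<le> l" using k by simp
    then have "real k \<le> 8 * real (l - k + 1)" using k by (simp add: of_nat_diff)
    moreover have "8 * real (l - k + 1) \<le> 4 / p * real (l - k + 1)"
      using p by (intro mult_right_mono) (simp_all add: le_divide_eq)
    ultimately show "real k \<le> 4 / p * real (l - k + 1)" by linarith
  qed (use p in simp)
  finally show ?thesis
    using m k unfolding m_def[symmetric] k_def[symmetric] by (simp add: mult_left_mono mult.assoc)
qed

lemma ln_one_minus_power_ge:
  fixes x :: real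
  assumes "0 \<le> x" "x \<le> 1/2" "k \<le> n"
  shows "- 2 * x * real n \<le> real k * ln (1 - x)"
proof -
  have "x * (2 * x) \<le> x * 1" using assms by (intro mult_left_mono) auto
  then have "- 2 * x \<le> ln (1 - x)"
    using ln_one_minus_pos_lower_bound[OF assms(1,2)] by (simp add: power2_eq_square)
  then have "real k * (- 2 * x) \<le> real k * ln (1 - x)" by (rule mult_left_mono) simp
  moreover have "real n * (- 2 * x) \<le> real k * (- 2 * x)"
    using assms by (intro mult_right_mono_neg) auto
  ultimately show ?thesis by (simp add: mult_ac)
qed

lemma has_sum_1_le_1:
  fixes f :: "'a \<Rightarrow> real"
  assumes "\<forall>x. 0 \<le> f x" "(f has_sum 1) UNIV" "finite F"
  shows "sum f F \<le> 1"
  by (rule has_sum_mono_neutral[OF has_sum_finite[OF assms(3)] assms(2)]) (use assms(1) in auto)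

lemma finite_level_set:
  fixes f :: "'a \<Rightarrow> real"
  assumes nonneg: "\<forall>x. 0 \<le> f x" and sum1: "(f has_sum 1) UNIV" and "0 < e"
  shows "finite {x. e \<le> f x}"
proof (rule ccontr)
  assume "infinite {x. e \<le> f x}"
  then obtain F where F: "F \<subseteq> {x. e \<le> f x}" "finite F" "card F = nat \<lceil>1 / e\<rceil> + 1"
    using infinite_arbitrarily_large by blast
  have "real (card F) * e \<le> sum f F"
    using sum_mono[of F "\<lambda>_. e" f] F(1) by auto
  moreover have "1 < real (card F) * e"
  proof -
    have "1 / e + 1 \<le> real (card F)" using F(3) by linarith
    then have "(1 / e + 1) * e \<le> real (card F) * e" using \<open>0 < e\<close> by (simp add: mult_right_mono)
    moreover have "(1 / e + 1) * e = 1 + e" using \<open>0 < e\<close> by (simp add: field_simps)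
    ultimately show ?thesis using \<open>0 < e\<close> by linarith
  qed
  ultimately show False using has_sum_1_le_1[OF nonneg sum1 F(2)] by linarith
qed

section \<open>Averages over subsets of fixed size\<close>

definition subset_sum :: "(int \<Rightarrow> real) \<Rightarrow> (nat \<Rightarrow> int) \<Rightarrow> nat \<Rightarrow> nat \<Rightarrow> int \<Rightarrow> real" where
  "subset_sum f X k l t = (\<Sum>S\<in>{S. S \<subseteq> {1..l} \<and> card S = k}. f (t + (\<Sum>j\<in>S. X j)))"

lemma subsets_Suc_eq:
  "{S. S \<subseteq> {1..Suc j} \<and> card S = Suc k} =
   {S. S \<subseteq> {1..j} \<and> card S = Suc k} \<union> insert (Suc j) ` {S. S \<subseteq> {1..j} \<and> card S = k}"
proof (intro equalityI subsetI)
  fix S assume S: "S \<in> {S. S \<subseteq> {1..Suc j} \<and> card S = Suc k}"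
  then have "finite S" using finite_subset by blast
  show "S \<in> {S. S \<subseteq> {1..j} \<and> card S = Suc k} \<union> insert (Suc j) ` {S. S \<subseteq> {1..j} \<and> card S = k}"
  proof (cases "Suc j \<in> S")
    case True
    then have "S = insert (Suc j) (S - {Suc j})" "S - {Suc j} \<subseteq> {1..j}" "card (S - {Suc j}) = k"
      using S \<open>finite S\<close> by auto
    then show ?thesis by blast
  next
    case False
    then show ?thesis using S by (auto simp: le_Suc_eq)
  qed
next
  fix S assume "S \<in> {S. S \<subseteq> {1..j} \<and> card S = Suc k} \<union> insert (Suc j) ` {S. S \<subseteq> {1..j} \<and> card S = k}"
  then show "S \<in> {S. S \<subseteq> {1..Suc j} \<and> card S = Suc k}"
  proof
    assume "S \<in> insert (Suc j) ` {S. S \<subseteq> {1..j} \<and> card S = k}"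
    then obtain U where U: "U \<subseteq> {1..j}" "card U = k" "S = insert (Suc j) U" by auto
    then have "finite U" "Suc j \<notin> U" using finite_subset by auto
    then show ?thesis using U by auto
  qed auto
qed

lemma subset_sum_Suc:
  "subset_sum f X (Suc k) (Suc j) t = subset_sum f X (Suc k) j t + subset_sum f X k j (t + X (Suc j))"
proof -
  let ?g = "\<lambda>S. f (t + (\<Sum>j\<in>S. X j))"
  let ?A = "{S. S \<subseteq> {1..j} \<and> card S = Suc k}"
  let ?B = "{S. S \<subseteq> {1..j} \<and> card S = k}"
  have fin: "finite ?A" "finite ?B" by (auto intro: finite_subset[of _ "Pow {1..j}"])
  have inj: "inj_on (insert (Suc j)) ?B"
    by (rule inj_onI) (metis Diff_insert_absorb atLeastAtMost_iff not_less_eq_eq order_refl subsetD mem_Collect_eq)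
  have "subset_sum f X (Suc k) (Suc j) t = sum ?g ?A + sum ?g (insert (Suc j) ` ?B)"
    unfolding subset_sum_def subsets_Suc_eq by (rule sum.union_disjoint) (use fin in auto)
  also have "sum ?g (insert (Suc j) ` ?B) = sum (?g \<circ> insert (Suc j)) ?B"
    by (rule sum.reindex[OF inj])
  also have "\<dots> = subset_sum f X k j (t + X (Suc j))"
    unfolding subset_sum_def
  proof (rule sum.cong)
    fix S assume "S \<in> ?B"
    then have "finite S" "Suc j \<notin> S" using finite_subset by auto
    then show "(?g \<circ> insert (Suc j)) S = f (t + X (Suc j) + (\<Sum>j\<in>S. X j))"
      by (simp add: add.assoc)
  qed simp
  finally show ?thesis unfolding subset_sum_def by simp
qed

lemma subset_sum_eq_0:
  assumes "l < k" shows "subset_sum f X k l t = 0"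
proof -
  have "{S. S \<subseteq> {1..l} \<and> card S = k} = {}"
  proof (intro equalityI subsetI)
    fix S assume "S \<in> {S. S \<subseteq> {1..l} \<and> card S = k}"
    then have "card S \<le> l" "card S = k" using card_mono[OF finite_atLeastAtMost, of S 1 l] by auto
    then show "S \<in> {}" using assms by simp
  qed simp
  then show ?thesis unfolding subset_sum_def by (metis sum.empty)
qed

lemma avg_eq_subset_sum: "0 \<le> s \<Longrightarrow> avg f X s l t = subset_sum f X (nat s) l t / real (l choose nat s)"
  by (auto simp: avg_def subset_sum_def)

lemma avg_eq_0_outside: "s < 0 \<or> int l < s \<Longrightarrow> avg f X s l t = 0"
  by (auto simp: avg_def)

lemma avg_nonzero_range: "avg f X s l t \<noteq> 0 \<Longrightarrow> 0 \<le> s \<and> s \<le> int l"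
  using avg_eq_0_outside by (metis not_le)

lemma avg_0: "avg f X 0 l t = f t"
proof -
  have "{S. S \<subseteq> {1..l} \<and> card S = 0} = {{}}"
  proof (intro equalityI subsetI)
    fix S assume "S \<in> {S. S \<subseteq> {1..l} \<and> card S = 0}"
    then have "finite S" "card S = 0" using finite_subset by auto
    then show "S \<in> {{}}" by simp
  qed simp
  then show ?thesis unfolding avg_def by simp
qed

lemma avg_ge_imp_summand_ge:
  assumes "0 < e" "e \<le> avg f X s l t"
  shows "\<exists>S. S \<subseteq> {1..l} \<and> card S = nat s \<and> e \<le> f (t + (\<Sum>j\<in>S. X j))"
proof (rule ccontr)
  define Fs where "Fs = {S. S \<subseteq> {1..l} \<and> card S = nat s}"
  assume "\<not> ?thesis"
  then have small: "\<And>S. S \<in> Fs \<Longrightarrow> f (t + (\<Sum>j\<in>S. X j)) < e" unfolding Fs_def by auto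
  have range: "0 \<le> s" "s \<le> int l" using avg_nonzero_range[of f X s l t] assms by auto
  have card: "card Fs = l choose nat s" unfolding Fs_def using n_subsets[of "{1..l}" "nat s"] by simp
  then have "0 < card Fs" using range by simp
  then have "finite Fs" "Fs \<noteq> {}" using card_gt_0_iff by blast+
  then have "(\<Sum>S\<in>Fs. f (t + (\<Sum>j\<in>S. X j))) < real (card Fs) * e"
    using sum_strict_mono[of Fs _ "\<lambda>_. e"] small by auto
  then have "avg f X s l t < e"
    using range \<open>0 < card Fs\<close> unfolding avg_def card[symmetric] Fs_def
    by (simp add: divide_less_eq mult.commute)
  then show False using assms by simp
qed

lemma finite_avg_level_set:
  assumes "\<forall>x. 0 \<le> f x" "(f has_sum 1) UNIV" "0 < e"
  shows "finite {t. e \<le> avg f X s l t}"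
proof (rule finite_subset)
  let ?Fs = "{S. S \<subseteq> {1..l} \<and> card S = nat s}"
  show "{t. e \<le> avg f X s l t} \<subseteq> (\<Union>S\<in>?Fs. (\<lambda>y. y - (\<Sum>j\<in>S. X j)) ` {y. e \<le> f y})"
  proof
    fix t assume "t \<in> {t. e \<le> avg f X s l t}"
    then obtain S where "S \<in> ?Fs" "t + (\<Sum>j\<in>S. X j) \<in> {y. e \<le> f y}"
      using avg_ge_imp_summand_ge[OF \<open>0 < e\<close>] by blast
    then show "t \<in> (\<Union>S\<in>?Fs. (\<lambda>y. y - (\<Sum>j\<in>S. X j)) ` {y. e \<le> f y})"
      by (intro UN_I[of S] image_eqI[of t _ "t + (\<Sum>j\<in>S. X j)"]) auto
  qed
  have "finite ?Fs" by (rule finite_subset[of _ "Pow {1..l}"]) auto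
  then show "finite (\<Union>S\<in>?Fs. (\<lambda>y. y - (\<Sum>j\<in>S. X j)) ` {y. e \<le> f y})"
    using finite_level_set[OF assms] by blast
qed

lemma avg_attains_SUP_bound:
  assumes "\<forall>x. 0 \<le> f x" "(f has_sum 1) UNIV" "0 < c" "c \<le> (SUP t. avg f X s l t)"
  shows "\<exists>t. c \<le> avg f X s l t"
proof (rule ccontr)
  assume "\<not> ?thesis"
  then have below: "avg f X s l t < c" for t by (simp add: not_le)
  \<comment> \<open>Only finitely many values exceed c/2, so the supremum is a maximum of values below c.\<close>
  define M where "M = Max (insert (c / 2) ((\<lambda>u. avg f X s l u) ` {u. c / 2 \<le> avg f X s l u}))"
  have fin: "finite (insert (c / 2) ((\<lambda>u. avg f X s l u) ` {u. c / 2 \<le> avg f X s l u}))"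
    using finite_avg_level_set[OF assms(1,2), of "c / 2"] assms(3) by simp
  have "c / 2 \<le> M" "\<And>u. c / 2 \<le> avg f X s l u \<Longrightarrow> avg f X s l u \<le> M"
    unfolding M_def by (intro Max_ge[OF fin]; simp)+
  then have "avg f X s l t \<le> M" for t by (cases "c / 2 \<le> avg f X s l t") auto
  then have "(SUP t. avg f X s l t) \<le> M" by (rule cSUP_least[OF UNIV_not_empty])
  moreover have "M < c"
    using Max_in[OF fin] below assms(3) unfolding M_def by auto
  ultimately show False using assms(4) by simp
qed

lemma avg_recurrence_Suc:
  assumes "k \<le> j"
  shows "avg f X (int (Suc k)) (Suc j) t
           = (1 - real (Suc k) / real (Suc j)) * avg f X (int (Suc k)) j t
             + (real (Suc k) / real (Suc j)) * avg f X (int k) j (t + X (Suc j))"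
proof -
  define a where "a = subset_sum f X (Suc k) j t"
  define b where "b = subset_sum f X k j (t + X (Suc j))"
  define B where "B = real (Suc j choose Suc k)"
  have B: "B > 0" using assms by (simp add: B_def del: binomial_Suc_Suc)
  have lhs: "avg f X (int (Suc k)) (Suc j) t = (a + b) / B"
    unfolding avg_eq_subset_sum[OF of_nat_0_le_iff] nat_int subset_sum_Suc a_def b_def B_def ..
  have "(Suc j - Suc k) * (Suc j choose Suc k) = Suc j * (j choose Suc k)"
    using binomial_absorb_comp[of "Suc j" "Suc k"] by simp
  then have absorb0: "(real (Suc j) - real (Suc k)) * B = real (Suc j) * real (j choose Suc k)"
    using assms unfolding B_def by (metis Suc_le_mono of_nat_diff of_nat_mult)
  have absorb1: "real (Suc k) * B = real (Suc j) * real (j choose k)"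
    using binomial_absorption[of k "Suc j"] unfolding B_def by (metis of_nat_mult diff_Suc_1)
  have t0: "(1 - real (Suc k) / real (Suc j)) * avg f X (int (Suc k)) j t = a / B"
  proof (cases "k < j")
    case True
    then have C: "real (j choose Suc k) > 0" by simp
    have "1 - real (Suc k) / real (Suc j) = real (j choose Suc k) / B"
      using absorb0 B by (simp add: field_simps)
    moreover have "avg f X (int (Suc k)) j t = a / real (j choose Suc k)"
      by (simp add: avg_eq_subset_sum a_def del: of_nat_Suc)
    ultimately show ?thesis using B C by simp
  next
    case False
    then show ?thesis using assms by (simp add: a_def subset_sum_eq_0 avg_eq_0_outside)
  qed
  have "real (Suc k) / real (Suc j) = real (j choose k) / B"
    using absorb1 B by (simp add: field_simps)
  moreover have "avg f X (int k) j (t + X (Suc j)) = b / real (j choose k)"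
    by (simp add: avg_eq_subset_sum b_def)
  moreover have "real (j choose k) > 0" using assms by simp
  ultimately have t1: "(real (Suc k) / real (Suc j)) * avg f X (int k) j (t + X (Suc j)) = b / B"
    using B by simp
  show ?thesis unfolding lhs t0 t1 by (simp add: add_divide_distrib)
qed

lemma avg_recurrence:
  assumes "1 \<le> i"
  shows "avg f X s i t = (1 - real_of_int s / real i) * avg f X s (i - 1) t
           + (real_of_int s / real i) * avg f X (s - 1) (i - 1) (t + X i)"
proof -
  obtain j where j: "i = Suc j" using assms by (cases i) auto
  consider "s \<le> 0" | "int i < s" | k where "s = int (Suc k)" "k \<le> j"
  proof (cases "0 < s \<and> s \<le> int i")
    case True
    then have "s = int (Suc (nat s - 1))" "nat s - 1 \<le> j" using j by auto
    then show ?thesis using that(3) by blast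
  qed (use that in auto)
  then show ?thesis
  proof cases
    case 1
    then show ?thesis by (cases "s = 0") (simp_all add: avg_eq_0_outside avg_0)
  next
    case 2
    then show ?thesis using j by (simp add: avg_eq_0_outside)
  next
    case 3
    moreover have "int (Suc k) - 1 = int k" by simp
    ultimately show ?thesis using avg_recurrence_Suc[OF 3(2)] j by (simp only: diff_Suc_1 of_int_of_nat_eq)
  qed
qed

section \<open>The averaging walk\<close>

lemma wbit_cases: "wbit f X t s i = 0 \<or> wbit f X t s i = 1"
  unfolding wbit_def by auto

lemma wbit_greedy:
  assumes "1 \<le> i" "0 < avg f X s i t"
  shows "(wbit f X t s i = 0 \<and> avg f X s i t \<le> avg f X s (i - 1) t \<and> s < int i) \<or>
         (wbit f X t s i = 1 \<and> avg f X s i t \<le> avg f X (s - 1) (i - 1) (t + X i) \<and> 0 < s)"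
proof -
  let ?h = "avg f X s i t"
  let ?A0 = "avg f X s (i - 1) t"
  let ?A1 = "avg f X (s - 1) (i - 1) (t + X i)"
  define r where "r = real_of_int s / real i"
  have range: "0 \<le> s" "s \<le> int i" using avg_nonzero_range[of f X s i t] assms by auto
  then have r: "0 \<le> r" "r \<le> 1" using assms(1) by (simp_all add: r_def divide_le_eq_1)
  have rec: "?h = (1 - r) * ?A0 + r * ?A1"
    unfolding r_def using avg_recurrence[OF assms(1)] .
  show ?thesis
  proof (cases "1 - r > 0 \<and> ?A0 \<ge> ?h")
    case True
    then have "s < int i" using assms(1) by (simp add: r_def field_simps)
    then show ?thesis using True unfolding wbit_def r_def by auto
  next
    case False
    then have w: "wbit f X t s i = 1" unfolding wbit_def r_def by auto
    have "?h \<le> ?A1"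
    proof (cases "r = 1")
      case False
      then have "1 - r > 0" "?A0 < ?h" using \<open>\<not> (1 - r > 0 \<and> ?A0 \<ge> ?h)\<close> r by auto
      then have "(1 - r) * ?A0 < (1 - r) * ?h" by simp
      moreover have "r * ?A1 = ?h - (1 - r) * ?A0" "(1 - r) * ?h = ?h - r * ?h"
        using rec by (simp_all add: algebra_simps)
      ultimately have "r * ?h < r * ?A1" by linarith
      moreover have "0 < r" using calculation r(1) by (cases "r = 0") auto
      ultimately show ?thesis by simp
    qed (use rec in simp)
    moreover have "s \<noteq> 0" using \<open>?h \<le> ?A1\<close> assms(2) avg_eq_0_outside[of "s - 1"] by auto
    ultimately show ?thesis using w range by auto
  qed
qed

text \<open>walk_t i and walk_s i are the paper's t_i and s_i. In the recurrence avg_recurrence at step i,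
  walk_q i is the coefficient of the branch taken and walk_other i the average along the other one.\<close>

locale averaging_walk =
  fixes f :: "int \<Rightarrow> real" and X :: "nat \<Rightarrow> int" and s :: int and l :: nat and t :: int
begin

definition walk_t :: "nat \<Rightarrow> int" where
  "walk_t i = fst (avstate f X l t s (l - i))"

definition walk_s :: "nat \<Rightarrow> int" where
  "walk_s i = snd (avstate f X l t s (l - i))"

definition walk_h :: "nat \<Rightarrow> real" where
  "walk_h i = avg f X (walk_s i) i (walk_t i)"

definition walk_q :: "nat \<Rightarrow> real" where
  "walk_q i = (if wseq f X s l t i = 0 then 1 - real_of_int (walk_s i) / real i
               else real_of_int (walk_s i) / real i)"

definition walk_other :: "nat \<Rightarrow> real" where
  "walk_other i = (if wseq f X s l t i = 0 then avg f X (walk_s i - 1) (i - 1) (walk_t i + X i)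
                   else avg f X (walk_s i) (i - 1) (walk_t i))"

lemma wseq_eq: "wseq f X s l t i = wbit f X (walk_t i) (walk_s i) i"
  unfolding wseq_def walk_t_def walk_s_def by (simp add: case_prod_beta)

lemma wseq_cases: "wseq f X s l t i = 0 \<or> wseq f X s l t i = 1"
  unfolding wseq_eq by (rule wbit_cases)

lemma tseq_eq: "tseq f X s l t i = walk_t i"
  unfolding tseq_def walk_t_def ..

lemma walk_start: "l \<le> i \<Longrightarrow> walk_t i = t" "l \<le> i \<Longrightarrow> walk_s i = s"
  unfolding walk_t_def walk_s_def by simp_all

lemma walk_step:
  assumes "1 \<le> i" "i \<le> l"
  shows "walk_t (i - 1) = walk_t i + wseq f X s l t i * X i"
    and "walk_s (i - 1) = walk_s i - wseq f X s l t i"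
proof -
  have "l - (i - 1) = Suc (l - i)" "l - (l - i) = i" using assms by auto
  moreover obtain a b where "avstate f X l t s (l - i) = (a, b)" by fastforce
  ultimately show "walk_t (i - 1) = walk_t i + wseq f X s l t i * X i"
    and "walk_s (i - 1) = walk_s i - wseq f X s l t i"
    unfolding walk_t_def walk_s_def wseq_eq by (simp_all add: Let_def)
qed

text \<open>For i \<ge> l the truncated difference l - i freezes the walk at (t, s), so the walk is
  monotone on all of nat.\<close>

lemma mono_walk_s: "mono walk_s"
  unfolding mono_iff_le_Suc
proof
  fix i show "walk_s i \<le> walk_s (Suc i)"
    using walk_step[of "Suc i"] wseq_cases[of "Suc i"] walk_start[of i] walk_start[of "Suc i"]
    by (cases "Suc i \<le> l") auto
qed

lemma mono_walk_zeros: "mono (\<lambda>i. int i - walk_s i)"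
  unfolding mono_iff_le_Suc
proof
  fix i show "int i - walk_s i \<le> int (Suc i) - walk_s (Suc i)"
    using walk_step[of "Suc i"] wseq_cases[of "Suc i"] walk_start[of i] walk_start[of "Suc i"]
    by (cases "Suc i \<le> l") auto
qed

lemma Wsum_eq: "i \<le> l \<Longrightarrow> Wsum f X s l t i = walk_s i - walk_s 0"
proof (induction i)
  case (Suc i)
  then show ?case using walk_step[of "Suc i"] by (simp add: Wsum_def)
qed (simp add: Wsum_def)

lemma walk_h_step:
  assumes "1 \<le> i" "i \<le> l" "0 < walk_h i"
  shows "walk_h i \<le> walk_h (i - 1)"
  using wbit_greedy[OF assms(1) assms(3)[unfolded walk_h_def]] walk_step[OF assms(1,2)]
  unfolding walk_h_def wseq_eq by auto

lemma walk_h_split: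
  assumes "1 \<le> i" "i \<le> l"
  shows "walk_h i = walk_q i * walk_h (i - 1) + (1 - walk_q i) * walk_other i"
proof -
  have rec: "walk_h i = (1 - real_of_int (walk_s i) / real i) * avg f X (walk_s i) (i - 1) (walk_t i)
      + (real_of_int (walk_s i) / real i) * avg f X (walk_s i - 1) (i - 1) (walk_t i + X i)"
    unfolding walk_h_def by (rule avg_recurrence[OF assms(1)])
  show ?thesis
    using wseq_cases[of i]
  proof
    assume w: "wseq f X s l t i = 0"
    then have e: "walk_s (i - 1) = walk_s i" "walk_t (i - 1) = walk_t i" using walk_step[OF assms] by auto
    show ?thesis using rec w unfolding walk_q_def walk_other_def walk_h_def[of "i - 1"] e
      by (simp add: algebra_simps)
  next
    assume w: "wseq f X s l t i = 1"
    then have e: "walk_s (i - 1) = walk_s i - 1" "walk_t (i - 1) = walk_t i + X i"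
      using walk_step[OF assms] by auto
    show ?thesis using rec w unfolding walk_q_def walk_other_def walk_h_def[of "i - 1"] e
      by (simp add: algebra_simps)
  qed
qed

end

locale positive_walk = averaging_walk +
  assumes avg_pos: "0 < avg f X s l t"
begin

lemma walk_h_ge: "i \<le> l \<Longrightarrow> avg f X s l t \<le> walk_h i"
proof (induction "l - i" arbitrary: i)
  case 0
  then have "i = l" by simp
  then show ?case using walk_start[of l] by (simp add: walk_h_def)
next
  case (Suc k)
  then have i: "Suc i \<le> l" by simp
  then have "avg f X s l t \<le> walk_h (Suc i)" using Suc.hyps by simp
  moreover have "walk_h (Suc i) \<le> walk_h i"
    using walk_h_step[of "Suc i"] i avg_pos calculation by simp
  ultimately show ?case by linarith
qed

lemma walk_s_range: "i \<le> l \<Longrightarrow> 0 \<le> walk_s i \<and> walk_s i \<le> int i"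
  using walk_h_ge[of i] avg_pos avg_nonzero_range[of f X "walk_s i" i "walk_t i"]
  unfolding walk_h_def by linarith

lemma walk_s_0: "walk_s 0 = 0"
  using walk_s_range[of 0] by simp

lemma Wsum_eq_walk_s: "i \<le> l \<Longrightarrow> Wsum f X s l t i = walk_s i"
  using Wsum_eq walk_s_0 by simp

end

section \<open>Weights along the walk\<close>

context positive_walk
begin

lemma walk_h_pos: "i \<le> l \<Longrightarrow> 0 < walk_h i"
  using walk_h_ge avg_pos by (meson less_le_trans)

lemma walk_greedy:
  assumes "1 \<le> i" "i \<le> l"
  shows "(wseq f X s l t i = 0 \<and> walk_s i < int i) \<or> (wseq f X s l t i = 1 \<and> 0 < walk_s i)"
  using wbit_greedy[OF assms(1) walk_h_pos[OF assms(2), unfolded walk_h_def]]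
  unfolding wseq_eq by auto

lemma walk_q_bounds:
  assumes "1 \<le> i" "i \<le> l"
  shows "0 < walk_q i" "walk_q i \<le> 1"
proof -
  have "0 \<le> walk_s i" "walk_s i \<le> int i" using walk_s_range[OF assms(2)] by auto
  then have "0 \<le> real_of_int (walk_s i) / real i" "real_of_int (walk_s i) / real i \<le> 1"
    using assms(1) by (simp_all add: divide_le_eq_1)
  moreover have "real_of_int (walk_s i) / real i < 1" if "walk_s i < int i"
    using that assms(1) by (simp add: divide_less_eq)
  ultimately show "0 < walk_q i" "walk_q i \<le> 1"
    using walk_greedy[OF assms] unfolding walk_q_def using assms(1) by auto
qed

lemma binomial_walk_step:
  assumes "1 \<le> i" "i \<le> l"
  shows "real ((i - 1) choose nat (walk_s (i - 1))) = walk_q i * real (i choose nat (walk_s i))"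
  using walk_greedy[OF assms]
proof (elim disjE conjE)
  assume w: "wseq f X s l t i = 0"
  define k where "k = nat (walk_s i)"
  have k: "walk_s i = int k" "walk_s (i - 1) = int k" using walk_s_range[OF assms(2)] walk_step[OF assms] w
    by (auto simp: k_def)
  have "(i - k) * (i choose k) = i * ((i - 1) choose k)" by (rule binomial_absorb_comp)
  then have "(real i - real k) * real (i choose k) = real i * real ((i - 1) choose k)"
    using walk_s_range[OF assms(2)] k by (metis of_nat_diff of_nat_mult of_nat_le_iff)
  then show ?thesis using w k assms(1) unfolding walk_q_def by (simp add: field_simps)
next
  assume w: "wseq f X s l t i = 1" and pos: "0 < walk_s i"
  define k where "k = nat (walk_s i) - 1"
  have k: "walk_s i = int (Suc k)" "nat (walk_s i) = Suc k" "walk_s (i - 1) = int k"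
    using pos walk_step[OF assms] w by (auto simp: k_def)
  have "Suc k * (i choose Suc k) = i * ((i - 1) choose k)" by (rule binomial_absorption)
  then have "real (Suc k) * real (i choose Suc k) = real i * real ((i - 1) choose k)"
    by (metis of_nat_mult)
  then show ?thesis using w k assms(1) unfolding walk_q_def by (simp add: field_simps)
qed

lemma drop_step_imp_walk_other_le:
  assumes "1 \<le> i" "i \<le> l" "drop_step R N n f X s l t i"
  shows "walk_other i \<le> R / (real N * sqrt (real n))"
proof -
  have drop: "avg f X (walk_s i - y) (i - 1) (walk_t (i - 1) + z * X i) \<le> R / (real N * sqrt (real n))"
    if "y \<in> {0, 1}" "z \<in> {-1, 1}" for y z
    using assms(3) that unfolding drop_step_def Wsum_eq_walk_s[OF assms(2)] tseq_eq by blast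
  show ?thesis
    using wseq_cases[of i]
  proof
    assume "wseq f X s l t i = 0"
    then show ?thesis using drop[of 1 1] walk_step[OF assms(1,2)] unfolding walk_other_def by simp
  next
    assume "wseq f X s l t i = 1"
    then show ?thesis using drop[of 0 "-1"] walk_step[OF assms(1,2)] unfolding walk_other_def by simp
  qed
qed

lemma prod_walk_q_binomial: "k \<le> l \<Longrightarrow> (\<Prod>i\<in>{1..k}. walk_q i) * real (k choose nat (walk_s k)) = 1"
proof (induction k)
  case 0
  then show ?case by (simp add: walk_s_0)
next
  case (Suc k)
  then show ?case
    using binomial_walk_step[of "Suc k"] by (simp add: prod.nat_ivl_Suc' mult_ac)
qed

lemma walk_step_ineq:
  assumes "0 \<le> \<gamma>" "\<gamma> \<le> 1" "1 \<le> i" "i \<le> l"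
    and other: "i \<in> D \<Longrightarrow> walk_other i \<le> \<gamma> * avg f X s l t"
  shows "(1 - \<gamma>) * (if i \<in> D then 1 else walk_q i) * walk_h i \<le> walk_q i * walk_h (i - 1)"
proof -
  have q: "0 < walk_q i" "walk_q i \<le> 1" using walk_q_bounds[OF assms(3,4)] by auto
  have h: "avg f X s l t \<le> walk_h i" "0 < avg f X s l t" using walk_h_ge[OF assms(4)] avg_pos by auto
  show ?thesis
  proof (cases "i \<in> D")
    case True
    have "(1 - walk_q i) * walk_other i \<le> (1 - walk_q i) * (\<gamma> * avg f X s l t)"
      using other[OF True] q by (simp add: mult_left_mono)
    also have "\<dots> \<le> \<gamma> * avg f X s l t"
      using q h assms(1) by (intro mult_left_le_one_le) auto
    also have "\<dots> \<le> \<gamma> * walk_h i"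
      using h assms(1) by (simp add: mult_left_mono)
    finally have "walk_h i \<le> walk_q i * walk_h (i - 1) + \<gamma> * walk_h i"
      using walk_h_split[OF assms(3,4)] by linarith
    then show ?thesis using True by (simp add: algebra_simps)
  next
    case False
    have "(1 - \<gamma>) * walk_q i * walk_h i \<le> walk_q i * walk_h i"
      using assms(1) q h by (simp add: mult_left_le_one_le)
    also have "\<dots> \<le> walk_q i * walk_h (i - 1)"
      using q walk_h_step[OF assms(3,4)] walk_h_pos[OF assms(4)] by (simp add: mult_left_mono)
    finally show ?thesis using False by simp
  qed
qed

lemma walk_h_0_ge:
  assumes "0 \<le> \<gamma>" "\<gamma> \<le> 1"
    and other: "\<And>i. i \<in> D \<Longrightarrow> walk_other i \<le> \<gamma> * avg f X s l t"
  shows "(1 - \<gamma>) ^ l * (\<Prod>i\<in>{1..l} - D. walk_q i) * real (l choose nat s) * avg f X s l t \<le> walk_h 0"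
proof -
  have chain: "(1 - \<gamma>) ^ k * (\<Prod>i\<in>{1..k} - D. walk_q i) * walk_h k \<le> walk_h 0 * (\<Prod>i\<in>{1..k}. walk_q i)"
    if "k \<le> l" for k
    using that
  proof (induction k)
    case (Suc k)
    let ?E = "\<Prod>i\<in>{1..k} - D. walk_q i"
    have E: "(\<Prod>i\<in>{1..Suc k} - D. walk_q i) = ?E * (if Suc k \<in> D then 1 else walk_q (Suc k))"
    proof (cases "Suc k \<in> D")
      case True
      then have "{1..Suc k} - D = {1..k} - D" by (auto simp: le_Suc_eq)
      then show ?thesis using True by simp
    next
      case False
      then have "{1..Suc k} - D = insert (Suc k) ({1..k} - D)" by (auto simp: le_Suc_eq)
      then show ?thesis using False by (simp add: mult.commute)
    qed
    have "0 \<le> ?E" using walk_q_bounds Suc.prems by (intro prod_nonneg) (auto intro: less_imp_le)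
    then have P: "0 \<le> (1 - \<gamma>) ^ k * ?E" using assms(2) by simp
    have "(1 - \<gamma>) ^ Suc k * (\<Prod>i\<in>{1..Suc k} - D. walk_q i) * walk_h (Suc k)
        = ((1 - \<gamma>) ^ k * ?E) * ((1 - \<gamma>) * (if Suc k \<in> D then 1 else walk_q (Suc k)) * walk_h (Suc k))"
      unfolding E by (simp add: mult_ac)
    also have "\<dots> \<le> ((1 - \<gamma>) ^ k * ?E) * (walk_q (Suc k) * walk_h k)"
      using walk_step_ineq[OF assms(1,2), of "Suc k" D] other Suc.prems by (intro mult_left_mono[OF _ P]) simp
    also have "\<dots> \<le> walk_h 0 * (\<Prod>i\<in>{1..k}. walk_q i) * walk_q (Suc k)"
      using Suc walk_q_bounds[of "Suc k"] by (simp add: mult_right_mono mult_ac)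
    finally show ?case by (simp add: prod.nat_ivl_Suc' mult_ac)
  qed simp
  have "walk_h l = avg f X s l t" "walk_s l = s" by (simp_all add: walk_h_def walk_start)
  then have "(1 - \<gamma>) ^ l * (\<Prod>i\<in>{1..l} - D. walk_q i) * real (l choose nat s) * avg f X s l t
      \<le> walk_h 0 * ((\<Prod>i\<in>{1..l}. walk_q i) * real (l choose nat s))"
    using mult_right_mono[OF chain[OF order_refl], of "real (l choose nat s)"] by (simp add: mult_ac)
  then show ?thesis using prod_walk_q_binomial[of l] \<open>walk_s l = s\<close> by simp
qed

lemma prod_walk_q_robust_ge:
  assumes "0 < lam" "G \<subseteq> {i \<in> {1..l}. robust_step lam f X s l t i}"
  shows "lam ^ card G \<le> (\<Prod>i\<in>G. walk_q i)"
proof -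
  have "(\<Prod>i\<in>G. lam) \<le> (\<Prod>i\<in>G. walk_q i)"
  proof (rule prod_mono)
    fix i assume "i \<in> G"
    then have "i \<le> l" "robust_step lam f X s l t i" using assms(2) by auto
    then have "lam < real_of_int (walk_s i) / real i \<and> real_of_int (walk_s i) / real i < 1 - lam"
      unfolding robust_step_def Wsum_eq_walk_s[OF \<open>i \<le> l\<close>] Let_def by simp
    then show "0 \<le> lam \<and> lam \<le> walk_q i" using assms(1) unfolding walk_q_def by auto
  qed
  then show ?thesis by simp
qed

lemma prod_walk_q_sparse_ge:
  assumes \<beta>: "0 < \<beta>" "\<beta> < 1"
  shows "(1 - \<beta>\<^sup>2) ^ l * exp (- 2 * \<beta> * real l)
    \<le> (\<Prod>i\<in>{i \<in> {1..l}. real_of_int (walk_s i) / real i \<le> \<beta>\<^sup>2}. walk_q i)"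
proof (rule prod_ge_of_few_increments[OF _ mono_walk_s \<beta>, where P = "\<lambda>i. wseq f X s l t i = 1"])
  fix i assume i: "i \<in> {i \<in> {1..l}. real_of_int (walk_s i) / real i \<le> \<beta>\<^sup>2}"
  then show "1 - \<beta>\<^sup>2 \<le> walk_q i" if "wseq f X s l t i \<noteq> 1"
    using that wseq_cases[of i] unfolding walk_q_def by auto
  assume "wseq f X s l t i = 1"
  moreover from this i have "walk_s (i - 1) = walk_s i - 1" "0 \<le> walk_s (i - 1)"
    using walk_step[of i] walk_s_range[of "i - 1"] by auto
  ultimately show "walk_q i = real_of_int (walk_s i) / real i \<and> walk_s (i - 1) < walk_s i \<and>
      1 \<le> walk_s i \<and> real_of_int (walk_s i) \<le> \<beta>\<^sup>2 * real i"
    using i unfolding walk_q_def by (auto simp: divide_le_eq)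
qed auto

lemma prod_walk_q_dense_ge:
  assumes \<beta>: "0 < \<beta>" "\<beta> < 1"
  shows "(1 - \<beta>\<^sup>2) ^ l * exp (- 2 * \<beta> * real l)
    \<le> (\<Prod>i\<in>{i \<in> {1..l}. 1 - \<beta>\<^sup>2 \<le> real_of_int (walk_s i) / real i}. walk_q i)"
proof (rule prod_ge_of_few_increments[OF _ mono_walk_zeros \<beta>, where P = "\<lambda>i. wseq f X s l t i = 0"])
  fix i assume i: "i \<in> {i \<in> {1..l}. 1 - \<beta>\<^sup>2 \<le> real_of_int (walk_s i) / real i}"
  then show "1 - \<beta>\<^sup>2 \<le> walk_q i" if "wseq f X s l t i \<noteq> 0"
    using that wseq_cases[of i] unfolding walk_q_def by auto
  assume "wseq f X s l t i = 0"
  moreover from this i have "walk_s (i - 1) = walk_s i" "walk_s (i - 1) \<le> int (i - 1)"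
    using walk_step[of i] walk_s_range[of "i - 1"] by auto
  moreover have "(1 - \<beta>\<^sup>2) * real i \<le> real_of_int (walk_s i)"
    using i by (simp add: le_divide_eq)
  ultimately show "walk_q i = real_of_int (int i - walk_s i) / real i \<and> int (i - 1) - walk_s (i - 1) < int i - walk_s i \<and>
      1 \<le> int i - walk_s i \<and> real_of_int (int i - walk_s i) \<le> \<beta>\<^sup>2 * real i"
    using i unfolding walk_q_def by (auto simp: diff_divide_distrib algebra_simps)
qed auto

lemma prod_walk_q_nondrop_ge:
  assumes \<beta>: "0 < \<beta>" "\<beta> < 1"
  shows "(\<beta>\<^sup>2) ^ card {i \<in> {1..l}. robust_step (\<beta>\<^sup>2) f X s l t i \<and> i \<notin> D}
           * ((1 - \<beta>\<^sup>2) ^ l * exp (- 2 * \<beta> * real l))\<^sup>2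
         \<le> (\<Prod>i\<in>{1..l} - D. walk_q i)"
proof -
  let ?G = "{i \<in> {1..l}. robust_step (\<beta>\<^sup>2) f X s l t i \<and> i \<notin> D}"
  let ?Lo = "{i \<in> {1..l}. real_of_int (walk_s i) / real i \<le> \<beta>\<^sup>2}"
  let ?Hi = "{i \<in> {1..l}. 1 - \<beta>\<^sup>2 \<le> real_of_int (walk_s i) / real i}"
  let ?Y = "(1 - \<beta>\<^sup>2) ^ l * exp (- 2 * \<beta> * real l)"
  have q: "\<And>i. i \<in> {1..l} \<Longrightarrow> 0 \<le> walk_q i \<and> walk_q i \<le> 1"
    using walk_q_bounds by (auto intro: less_imp_le)
  have cover: "{1..l} - D \<subseteq> ?G \<union> (?Lo \<union> ?Hi)"
  proof
    fix i assume i: "i \<in> {1..l} - D"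
    then have "Wsum f X s l t i = walk_s i" using Wsum_eq_walk_s by simp
    then show "i \<in> ?G \<union> (?Lo \<union> ?Hi)" using i by (auto simp: robust_step_def Let_def)
  qed
  have Y: "0 \<le> ?Y" using \<beta> by (simp add: power_le_one)
  have "(\<beta>\<^sup>2) ^ card ?G * ?Y\<^sup>2 \<le> (\<Prod>i\<in>?G. walk_q i) * ((\<Prod>i\<in>?Lo. walk_q i) * (\<Prod>i\<in>?Hi. walk_q i))"
    unfolding power2_eq_square[of ?Y]
    using prod_walk_q_robust_ge[of "\<beta>\<^sup>2" ?G] prod_walk_q_sparse_ge[OF \<beta>] prod_walk_q_dense_ge[OF \<beta>] Y \<beta>
    by (intro mult_mono) (auto intro!: prod_nonneg simp: q)
  also have "\<dots> \<le> (\<Prod>i\<in>?G. walk_q i) * (\<Prod>i\<in>?Lo \<union> ?Hi. walk_q i)"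
    using prod_union_ge[of ?Lo ?Hi walk_q] q by (intro mult_left_mono prod_nonneg) auto
  also have "\<dots> \<le> (\<Prod>i\<in>?G \<union> (?Lo \<union> ?Hi). walk_q i)"
    using prod_union_ge[of ?G "?Lo \<union> ?Hi" walk_q] q by auto
  also have "\<dots> \<le> (\<Prod>i\<in>{1..l} - D. walk_q i)"
    using prod_superset_le[OF _ cover, of walk_q] q by auto
  finally show ?thesis .
qed

theorem robust_nondrop_weight_bound:
  assumes \<beta>: "0 < \<beta>" "\<beta> < 1" and \<gamma>: "0 \<le> \<gamma>" "\<gamma> \<le> 1"
    and threshold: "R / (real N * sqrt (real n)) \<le> \<gamma> * avg f X s l t"
  shows "(1 - \<gamma>) ^ l * real (l choose nat s) * avg f X s l t
           * (\<beta>\<^sup>2) ^ card {i \<in> {1..l}. robust_step (\<beta>\<^sup>2) f X s l t i \<and> \<not> drop_step R N n f X s l t i}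
           * ((1 - \<beta>\<^sup>2) ^ l * exp (- 2 * \<beta> * real l))\<^sup>2
         \<le> f (walk_t 0)"
proof -
  define D where "D = {i \<in> {1..l}. drop_step R N n f X s l t i}"
  have G: "{i \<in> {1..l}. robust_step (\<beta>\<^sup>2) f X s l t i \<and> \<not> drop_step R N n f X s l t i}
      = {i \<in> {1..l}. robust_step (\<beta>\<^sup>2) f X s l t i \<and> i \<notin> D}"
    unfolding D_def by auto
  have c: "0 \<le> (1 - \<gamma>) ^ l * real (l choose nat s) * avg f X s l t"
    using \<gamma> avg_pos by simp
  have "(1 - \<gamma>) ^ l * real (l choose nat s) * avg f X s l t * (\<Prod>i\<in>{1..l} - D. walk_q i) \<le> walk_h 0"
    using walk_h_0_ge[OF \<gamma>, of D] drop_step_imp_walk_other_le threshold unfolding D_def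
    by (force simp: mult_ac)
  then show ?thesis
    using mult_left_mono[OF prod_walk_q_nondrop_ge[OF \<beta>, of D] c] walk_s_0
    unfolding G walk_h_def by (simp add: avg_0 mult_ac)
qed

end

section \<open>Counting robust non-drop steps\<close>

lemma ln_binomial_floor_le:
  fixes p \<gamma> :: real and n l :: nat and s :: int
  assumes p: "0 < p" "p \<le> 1/2" and \<gamma>: "0 < \<gamma>" "\<gamma> \<le> p/2" "\<gamma> \<le> 1/4"
    and l: "(1 - \<gamma>) * real n \<le> real l" "l \<le> n"
    and s: "p * real l - \<gamma> * real l \<le> real_of_int s" "real_of_int s \<le> p * real l + \<gamma> * real l"
  shows "ln (real (n choose nat \<lfloor>p * real n\<rfloor>))
           \<le> ln (real (l choose nat s)) + \<gamma> * real n * ln 4 + (2 * \<gamma> * real n + 1) * ln (4 / p)"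
proof -
  define d where "d = nat \<bar>\<lfloor>p * real n\<rfloor> - s\<bar>"
  have "p * real n \<le> real n" using p by (simp add: mult_left_le_one_le)
  then have "nat \<lfloor>p * real n\<rfloor> \<le> n" by (simp add: nat_le_iff floor_le_iff)
  then have Bn: "0 < real (n choose nat \<lfloor>p * real n\<rfloor>)" by simp
  have "p * real l / 2 \<le> real_of_int s" "real_of_int s \<le> 3/4 * real l"
    by (rule bounded_deviation_range[OF p \<gamma> s])+
  moreover have "0 \<le> p * real l / 2" using p by simp
  ultimately have "0 \<le> s" "s \<le> int l" by linarith+
  then have B: "0 < real (l choose nat s)" by simp
  have C: "0 < ln (4 / p)" using p by simp
  have "real (n - l) \<le> \<gamma> * real n" using l by (simp add: of_nat_diff algebra_simps)
  then have e4: "real (n - l) * ln 4 \<le> \<gamma> * real n * ln 4" by (simp add: mult_right_mono)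
  have "real d \<le> 2 * \<gamma> * real n + 1"
  proof -
    have "p * (real n - real l) \<le> 1 * (real n - real l)"
      using p l by (intro mult_right_mono) auto
    then have "p * real n - p * real l \<le> \<gamma> * real n"
      using l by (simp add: algebra_simps)
    moreover have "0 \<le> p * real n - p * real l" "\<gamma> * real l \<le> \<gamma> * real n"
      using p \<gamma> l by (simp_all add: mult_left_mono)
    ultimately show ?thesis unfolding d_def using s by linarith
  qed
  then have eC: "real d * ln (4 / p) \<le> (2 * \<gamma> * real n + 1) * ln (4 / p)"
    using C by (simp add: mult_right_mono)
  have "ln (real (n choose nat \<lfloor>p * real n\<rfloor>)) \<le> ln (4 ^ (n - l) * (4 / p) ^ d * real (l choose nat s))"
    using binomial_floor_le_nearby[OF p \<gamma> l s] Bn B p unfolding d_def by (simp add: ln_le_cancel_iff)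
  also have "\<dots> = real (n - l) * ln 4 + real d * ln (4 / p) + ln (real (l choose nat s))"
    using p B by (simp add: ln_mult ln_realpow)
  finally show ?thesis using e4 eC by linarith
qed

text \<open>With lambda = \<beta>^2, each condition on \<beta> and \<gamma> caps one loss in the exponent count of
  count_ge_of_weight_bound at \<epsilon> n / 8, and the bound on n0 caps ln (4 / p) and ln (sqrt n) at
  \<epsilon> n / 4.\<close>

definition suitable_constants :: "real \<Rightarrow> real \<Rightarrow> real \<Rightarrow> real \<Rightarrow> nat \<Rightarrow> bool" where
  "suitable_constants p \<epsilon> \<beta> \<gamma> n0 \<longleftrightarrow>
     0 < \<beta> \<and> \<beta>\<^sup>2 < 1/3 \<and> 4 * \<beta>\<^sup>2 + 4 * \<beta> \<le> \<epsilon> / 8 \<and>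
     0 < \<gamma> \<and> \<gamma> \<le> p / 2 \<and> \<gamma> \<le> 1/4 \<and> \<gamma> * ln (1 / \<beta>\<^sup>2) \<le> \<epsilon> / 8 \<and>
     \<gamma> * (2 + ln 4 + 2 * ln (4 / p)) \<le> \<epsilon> / 8 \<and>
     16 / \<epsilon>\<^sup>2 + 4 * ln (4 / p) / \<epsilon> \<le> real n0"

lemma suitable_constants_exist:
  assumes p: "0 < p" "p \<le> 1/2" and \<epsilon>: "0 < \<epsilon>" "\<epsilon> \<le> 1"
  shows "\<exists>\<beta> \<gamma> n0. suitable_constants p \<epsilon> \<beta> \<gamma> n0"
proof -
  define \<beta> where "\<beta> = \<epsilon> / 64"
  define K where "K = 2 + ln 4 + 2 * ln (4 / p)"
  define \<gamma> where "\<gamma> = min (p / 2) (min (1 / 4) (min (\<epsilon> / (8 * ln (1 / \<beta>\<^sup>2))) (\<epsilon> / (8 * K))))"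
  have \<beta>: "0 < \<beta>" "\<beta> \<le> 1/64" using \<epsilon> by (simp_all add: \<beta>_def)
  then have "\<beta>\<^sup>2 \<le> \<beta> / 64" by (simp add: power2_eq_square mult_left_mono)
  then have \<beta>2: "\<beta>\<^sup>2 < 1/3" "4 * \<beta>\<^sup>2 + 4 * \<beta> \<le> \<epsilon> / 8" using \<beta> by (simp_all add: \<beta>_def)
  have "\<beta>\<^sup>2 < 1" using \<beta>2 by simp
  then have L: "0 < ln (1 / \<beta>\<^sup>2)" using \<beta> by simp
  have "0 < ln (4 / p)" using p by simp
  moreover have "0 < ln (4 :: real)" by simp
  ultimately have K: "0 < K" unfolding K_def by linarith
  have \<gamma>: "0 < \<gamma>" "\<gamma> \<le> p / 2" "\<gamma> \<le> 1/4" unfolding \<gamma>_def using p \<epsilon> L K by simp_all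
  have "\<gamma> \<le> \<epsilon> / (8 * ln (1 / \<beta>\<^sup>2))" "\<gamma> \<le> \<epsilon> / (8 * K)" unfolding \<gamma>_def by auto
  then have "\<gamma> * ln (1 / \<beta>\<^sup>2) \<le> \<epsilon> / 8" "\<gamma> * K \<le> \<epsilon> / 8"
    using L K by (simp_all add: le_divide_eq mult_ac)
  moreover have "16 / \<epsilon>\<^sup>2 + 4 * ln (4 / p) / \<epsilon> \<le> real (nat \<lceil>16 / \<epsilon>\<^sup>2 + 4 * ln (4 / p) / \<epsilon>\<rceil>)"
    by linarith
  ultimately have "suitable_constants p \<epsilon> \<beta> \<gamma> (nat \<lceil>16 / \<epsilon>\<^sup>2 + 4 * ln (4 / p) / \<epsilon>\<rceil>)"
    unfolding suitable_constants_def K_def using \<beta> \<beta>2 \<gamma> by blast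
  then show ?thesis by blast
qed

lemma sqrt_le_of_ge:
  assumes "0 < \<epsilon>" "16 / \<epsilon>\<^sup>2 \<le> real n"
  shows "sqrt (real n) \<le> \<epsilon> * real n / 4"
proof -
  have "4 / \<epsilon> = sqrt (16 / \<epsilon>\<^sup>2)" using assms(1) by (simp add: real_sqrt_divide)
  also have "\<dots> \<le> sqrt (real n)" using assms(2) by simp
  finally have "4 \<le> \<epsilon> * sqrt (real n)" using assms(1) by (simp add: divide_le_eq mult.commute)
  then have "4 * sqrt (real n) \<le> \<epsilon> * sqrt (real n) * sqrt (real n)" by (simp add: mult_right_mono)
  then show ?thesis by (simp add: mult.assoc)
qed

lemma suitable_constants_large_n:
  assumes "0 < p" "p \<le> 1/2" "0 < \<epsilon>" "suitable_constants p \<epsilon> \<beta> \<gamma> n0" "n0 \<le> n"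
  shows "0 < real n" "ln (4 / p) \<le> \<epsilon> * real n / 4" "ln (sqrt (real n)) < \<epsilon> * real n / 4"
proof -
  have "1 \<le> 4 / p" using assms(1,2) by simp
  then have C: "0 \<le> 4 * ln (4 / p) / \<epsilon>" using assms(3) by simp
  have "16 / \<epsilon>\<^sup>2 + 4 * ln (4 / p) / \<epsilon> \<le> real n"
    using assms(4,5) unfolding suitable_constants_def by (meson of_nat_mono order_trans)
  moreover have "0 < 16 / \<epsilon>\<^sup>2" using assms(3) by simp
  ultimately have n: "16 / \<epsilon>\<^sup>2 \<le> real n" "4 * ln (4 / p) / \<epsilon> \<le> real n" "0 < real n"
    using C by linarith+
  then show "0 < real n" "ln (4 / p) \<le> \<epsilon> * real n / 4"
    using assms(3) by (simp_all add: divide_le_eq mult.commute)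
  have "0 < sqrt (real n)" using n(3) by simp
  then show "ln (sqrt (real n)) < \<epsilon> * real n / 4"
    using ln_less_self sqrt_le_of_ge[OF assms(3) n(1)] by (smt (verit))
qed

lemma suitable_constants_exponents:
  assumes "suitable_constants p \<epsilon> \<beta> \<gamma> n0"
  shows "2 * \<gamma> * real n + \<gamma> * real n * ln 4 + 2 * \<gamma> * real n * ln (4 / p) \<le> \<epsilon> * real n / 8"
    and "4 * \<beta>\<^sup>2 * real n + 4 * \<beta> * real n \<le> \<epsilon> * real n / 8"
    and "real G \<le> \<gamma> * real n \<Longrightarrow> - (\<epsilon> * real n / 8) \<le> real G * ln (\<beta>\<^sup>2)"
proof -
  have c: "\<gamma> * (2 + ln 4 + 2 * ln (4 / p)) \<le> \<epsilon> / 8" "4 * \<beta>\<^sup>2 + 4 * \<beta> \<le> \<epsilon> / 8"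
    "\<gamma> * ln (1 / \<beta>\<^sup>2) \<le> \<epsilon> / 8" "\<beta>\<^sup>2 < 1" "0 < \<beta>"
    using assms unfolding suitable_constants_def by auto
  have "(\<gamma> * (2 + ln 4 + 2 * ln (4 / p))) * real n \<le> (\<epsilon> / 8) * real n"
    "(4 * \<beta>\<^sup>2 + 4 * \<beta>) * real n \<le> (\<epsilon> / 8) * real n"
    by (rule mult_right_mono[OF c(1)] mult_right_mono[OF c(2)]; simp)+
  then show "2 * \<gamma> * real n + \<gamma> * real n * ln 4 + 2 * \<gamma> * real n * ln (4 / p) \<le> \<epsilon> * real n / 8"
    and "4 * \<beta>\<^sup>2 * real n + 4 * \<beta> * real n \<le> \<epsilon> * real n / 8"
    by (simp_all add: algebra_simps)
  assume "real G \<le> \<gamma> * real n"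
  moreover have "ln (\<beta>\<^sup>2) < 0" using c by simp
  ultimately have "\<gamma> * real n * ln (\<beta>\<^sup>2) \<le> real G * ln (\<beta>\<^sup>2)" by (simp add: mult_right_mono_neg)
  moreover have "(\<gamma> * ln (1 / \<beta>\<^sup>2)) * real n \<le> (\<epsilon> / 8) * real n"
    using c(3) by (rule mult_right_mono) simp
  moreover have "ln (1 / \<beta>\<^sup>2) = - ln (\<beta>\<^sup>2)" using c by (simp add: ln_div)
  ultimately show "- (\<epsilon> * real n / 8) \<le> real G * ln (\<beta>\<^sup>2)" by (simp add: algebra_simps)
qed

lemma count_ge_of_weight_bound:
  fixes p \<epsilon> \<beta> \<gamma> a :: real and n0 n N l G :: nat and s :: int
  assumes p: "0 < p" "p \<le> 1/2" and \<epsilon>: "0 < \<epsilon>" and const: "suitable_constants p \<epsilon> \<beta> \<gamma> n0"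
    and n: "n0 \<le> n" and N: "1 \<le> N" "real N \<le> real (n choose nat \<lfloor>p * real n\<rfloor>) * exp (- \<epsilon> * real n)"
    and l: "(1 - \<gamma>) * real n \<le> real l" "l \<le> n"
    and s: "p * real l - \<gamma> * real l \<le> real_of_int s" "real_of_int s \<le> p * real l + \<gamma> * real l"
    and a: "1 / (real N * sqrt (real n)) \<le> a"
    and weight: "(1 - \<gamma>) ^ l * real (l choose nat s) * a * (\<beta>\<^sup>2) ^ G
                   * ((1 - \<beta>\<^sup>2) ^ l * exp (- 2 * \<beta> * real l))\<^sup>2 \<le> 1"
  shows "\<gamma> * real n \<le> real G"
proof (rule ccontr)
  assume "\<not> \<gamma> * real n \<le> real G"
  then have G: "real G \<le> \<gamma> * real n" by simp
  define Bn where "Bn = real (n choose nat \<lfloor>p * real n\<rfloor>)"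
  define B where "B = real (l choose nat s)"
  define Y where "Y = (1 - \<beta>\<^sup>2) ^ l * exp (- 2 * \<beta> * real l)"
  have \<beta>: "0 < \<beta>" "\<beta>\<^sup>2 \<le> 1/2" and \<gamma>: "0 < \<gamma>" "\<gamma> \<le> p / 2" "\<gamma> \<le> 1/4"
    using const unfolding suitable_constants_def by auto
  note n = suitable_constants_large_n[OF p \<epsilon> const n]
  have "p * real l / 2 \<le> real_of_int s" "real_of_int s \<le> 3/4 * real l" "0 \<le> p * real l / 2"
    using bounded_deviation_range[OF p \<gamma> s] p by auto
  then have B: "0 < B" unfolding B_def by simp
  have "0 < real N" "0 < sqrt (real n)" using N n by simp_all
  then have "0 < Bn * exp (- \<epsilon> * real n)" using N(2) unfolding Bn_def by linarith
  then have "0 < Bn" "ln (real N) \<le> ln Bn - \<epsilon> * real n"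
    using ln_mono[OF N(2) \<open>0 < real N\<close>] by (simp_all add: zero_less_mult_iff ln_mult Bn_def)
  moreover have "0 < 1 / (real N * sqrt (real n))" using \<open>0 < real N\<close> \<open>0 < sqrt (real n)\<close> by simp
  then have "0 < a" "ln (1 / (real N * sqrt (real n))) \<le> ln a" using a by (linarith, intro ln_mono)
  ultimately have ln_a: "\<epsilon> * real n - ln Bn - ln (sqrt (real n)) \<le> ln a"
    using \<open>0 < real N\<close> \<open>0 < sqrt (real n)\<close> by (simp add: ln_div ln_mult)
  have "0 < (1 - \<gamma>) ^ l * B * a * (\<beta>\<^sup>2) ^ G * Y\<^sup>2" using \<gamma> \<beta> B \<open>0 < a\<close> by (simp add: Y_def)
  moreover have "(1 - \<gamma>) ^ l * B * a * (\<beta>\<^sup>2) ^ G * Y\<^sup>2 \<le> 1"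
    using weight unfolding B_def Y_def .
  ultimately have "ln ((1 - \<gamma>) ^ l * B * a * (\<beta>\<^sup>2) ^ G * Y\<^sup>2) \<le> 0" by simp
  also have "ln ((1 - \<gamma>) ^ l * B * a * (\<beta>\<^sup>2) ^ G * Y\<^sup>2)
      = real l * ln (1 - \<gamma>) + ln B + ln a + real G * ln (\<beta>\<^sup>2) + 2 * (real l * ln (1 - \<beta>\<^sup>2)) - 4 * (\<beta> * real l)"
    using \<gamma> \<beta> B \<open>0 < a\<close> unfolding Y_def by (simp add: ln_mult ln_realpow)
  finally have total: "real l * ln (1 - \<gamma>) + ln B + ln a + real G * ln (\<beta>\<^sup>2)
      + 2 * (real l * ln (1 - \<beta>\<^sup>2)) - 4 * (\<beta> * real l) \<le> 0" .
  have "- 2 * \<gamma> * real n \<le> real l * ln (1 - \<gamma>)" "- 2 * \<beta>\<^sup>2 * real n \<le> real l * ln (1 - \<beta>\<^sup>2)"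
    "\<beta> * real l \<le> \<beta> * real n"
    using ln_one_minus_power_ge[of \<gamma> l n] ln_one_minus_power_ge[of "\<beta>\<^sup>2" l n] \<gamma> \<beta> l p by auto
  moreover have "ln Bn \<le> ln B + \<gamma> * real n * ln 4 + (2 * \<gamma> * real n + 1) * ln (4 / p)"
    using ln_binomial_floor_le[OF p \<gamma> l s] unfolding B_def Bn_def .
  moreover have "0 < \<epsilon> * real n" using \<epsilon> n by simp
  ultimately show False
    using total ln_a n suitable_constants_exponents(1,2)[OF const, where n = n]
      suitable_constants_exponents(3)[OF const G] by (simp add: algebra_simps)
qed

lemma many_robust_nondrop_steps:
  fixes p \<epsilon> \<beta> \<gamma> L :: real and n0 n N l :: nat and s :: int and f :: "int \<Rightarrow> real" and X :: "nat \<Rightarrow> int"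
  assumes p: "0 < p" "p \<le> 1/2" and \<epsilon>: "0 < \<epsilon>" and const: "suitable_constants p \<epsilon> \<beta> \<gamma> n0"
    and n: "n0 \<le> n" and N: "1 \<le> N" "real N \<le> real (n choose nat \<lfloor>p * real n\<rfloor>) * exp (- \<epsilon> * real n)"
    and f: "\<forall>x. 0 \<le> f x" "(f has_sum 1) UNIV" and L: "1 \<le> L"
    and l: "(1 - \<gamma>) * real n \<le> real l" "l \<le> n"
    and s: "p * real l - \<gamma> * real l \<le> real_of_int s" "real_of_int s \<le> p * real l + \<gamma> * real l"
    and sup: "L / (real N * sqrt (real n)) \<le> (SUP t. avg f X s l t)"
  shows "\<exists>t. L / (real N * sqrt (real n)) \<le> avg f X s l t \<and>
           \<gamma> * real n \<le> real (card {i \<in> {1..l}. robust_step (\<beta>\<^sup>2) f X s l t i \<and>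
                                              \<not> drop_step (\<gamma> * L) N n f X s l t i})"
proof -
  have c: "0 < \<beta>" "\<beta>\<^sup>2 < 1/3" "0 < \<gamma>" "\<gamma> \<le> 1/4"
    using const unfolding suitable_constants_def by auto
  have "0 < real n" by (rule suitable_constants_large_n[OF p \<epsilon> const n])
  then have "0 < L / (real N * sqrt (real n))" using L N by simp
  then obtain t where t: "L / (real N * sqrt (real n)) \<le> avg f X s l t"
    using avg_attains_SUP_bound[OF f _ sup] by blast
  interpret positive_walk f X s l t
    using t \<open>0 < L / (real N * sqrt (real n))\<close> by unfold_locales linarith
  have "\<beta> < 1" using c(1,2) abs_square_less_1[of \<beta>] by simp
  have "\<gamma> * L / (real N * sqrt (real n)) \<le> \<gamma> * avg f X s l t"
    using mult_left_mono[OF t, of \<gamma>] c(3) by simp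
  then have "(1 - \<gamma>) ^ l * real (l choose nat s) * avg f X s l t
      * (\<beta>\<^sup>2) ^ card {i \<in> {1..l}. robust_step (\<beta>\<^sup>2) f X s l t i \<and> \<not> drop_step (\<gamma> * L) N n f X s l t i}
      * ((1 - \<beta>\<^sup>2) ^ l * exp (- 2 * \<beta> * real l))\<^sup>2 \<le> 1"
    using robust_nondrop_weight_bound[OF c(1) \<open>\<beta> < 1\<close>, of \<gamma> "\<gamma> * L" N n] c(3,4)
      has_sum_1_le_1[OF f, of "{walk_t 0}"] by simp
  moreover have "1 / (real N * sqrt (real n)) \<le> L / (real N * sqrt (real n))"
    using L by (simp add: divide_right_mono)
  then have "1 / (real N * sqrt (real n)) \<le> avg f X s l t" using t by linarith
  ultimately have "\<gamma> * real n \<le> real (card {i \<in> {1..l}. robust_step (\<beta>\<^sup>2) f X s l t i \<and>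
                                              \<not> drop_step (\<gamma> * L) N n f X s l t i})"
    by (rule count_ge_of_weight_bound[OF p \<epsilon> const n N l s, rotated])
  then show ?thesis using t by blast
qed

theorem lemma3p11:
  fixes \<delta> K1 K2 K3 :: real
  assumes "0 < \<delta>" "\<delta> < 1/4" "1 < K1" "K1 < K2" "K2 < K3"
  shows "\<exists>c :: real \<Rightarrow> real. (\<forall>p. 0 < p \<and> p \<le> 1/2 \<longrightarrow> c p > 0) \<and>
    (\<forall>p \<epsilon>. 0 < p \<and> p \<le> 1/2 \<and> 0 < \<epsilon> \<and> \<epsilon> \<le> c p \<longrightarrow>
      (\<exists>lam \<gamma> :: real. \<exists>n0 :: nat. 0 < lam \<and> lam < 1/3 \<and> 0 < \<gamma> \<and> \<gamma> < 1 \<and>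
        (\<forall>(n::nat) (N::nat) (A::nat \<Rightarrow> int set) (f::int \<Rightarrow> real) (L::real) (l::nat) (s::int) (X::nat \<Rightarrow> int).
           n \<ge> n0 \<and> 1 \<le> N \<and>
           real N \<le> real (n choose nat \<lfloor>p * real n\<rfloor>) * exp (- \<epsilon> * real n) \<and>
           admissible N n K1 K2 K3 \<delta> A \<and>
           (\<forall>x. f x \<ge> 0) \<and> (f has_sum 1) UNIV \<and>
           L \<ge> 1 \<and>
           (1 - \<gamma>) * real n \<le> real l \<and> l \<le> n \<and>
           p * real l - \<gamma> * real l \<le> real_of_int s \<and> real_of_int s \<le> p * real l + \<gamma> * real l \<and>
           (\<forall>i\<in>{1..n}. X i \<in> A i) \<and>
           (SUP t. avg f X s l t) \<ge> L / (real N * sqrt (real n))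
           \<longrightarrow>
           (\<exists>t::int. avg f X s l t \<ge> L / (real N * sqrt (real n)) \<and>
              real (card {i\<in>{1..l}. robust_step lam f X s l t i \<and>
                                   \<not> drop_step (\<gamma> * L) N n f X s l t i}) \<ge> \<gamma> * real n))))"
proof (intro exI[of _ "\<lambda>_. 1"] conjI allI impI)
  fix p \<epsilon> :: real
  assume "0 < p \<and> p \<le> 1/2 \<and> 0 < \<epsilon> \<and> \<epsilon> \<le> (\<lambda>_. 1::real) p"
  then have p: "0 < p" "p \<le> 1/2" and \<epsilon>: "0 < \<epsilon>" "\<epsilon> \<le> 1" by auto
  then obtain \<beta> \<gamma> n0 where const: "suitable_constants p \<epsilon> \<beta> \<gamma> n0"
    using suitable_constants_exist by blast
  then have lam: "0 < \<beta>\<^sup>2" "\<beta>\<^sup>2 < 1/3" "0 < \<gamma>" "\<gamma> < 1" unfolding suitable_constants_def by auto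
  show "\<exists>lam \<gamma> :: real. \<exists>n0 :: nat. 0 < lam \<and> lam < 1/3 \<and> 0 < \<gamma> \<and> \<gamma> < 1 \<and>
        (\<forall>(n::nat) (N::nat) (A::nat \<Rightarrow> int set) (f::int \<Rightarrow> real) (L::real) (l::nat) (s::int) (X::nat \<Rightarrow> int).
           n \<ge> n0 \<and> 1 \<le> N \<and>
           real N \<le> real (n choose nat \<lfloor>p * real n\<rfloor>) * exp (- \<epsilon> * real n) \<and>
           admissible N n K1 K2 K3 \<delta> A \<and>
           (\<forall>x. f x \<ge> 0) \<and> (f has_sum 1) UNIV \<and>
           L \<ge> 1 \<and>
           (1 - \<gamma>) * real n \<le> real l \<and> l \<le> n \<and>
           p * real l - \<gamma> * real l \<le> real_of_int s \<and> real_of_int s \<le> p * real l + \<gamma> * real l \<and>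
           (\<forall>i\<in>{1..n}. X i \<in> A i) \<and>
           (SUP t. avg f X s l t) \<ge> L / (real N * sqrt (real n))
           \<longrightarrow>
           (\<exists>t::int. avg f X s l t \<ge> L / (real N * sqrt (real n)) \<and>
              real (card {i\<in>{1..l}. robust_step lam f X s l t i \<and>
                                   \<not> drop_step (\<gamma> * L) N n f X s l t i}) \<ge> \<gamma> * real n))"
    by (rule exI[of _ "\<beta>\<^sup>2"], rule exI[of _ \<gamma>], rule exI[of _ n0])
      (use lam many_robust_nondrop_steps[OF p \<epsilon>(1) const] in blast)
qed simp

end
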